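(* Let $H=\Bbbk[D]$, let $A$ be an alternative algebra over $\Bbbk$ which is not associative, and let $a,b,c\in A$ with $\{a,b,c\}:=(ab)c-a(bc)\neq0$. Let $A[t]=A\otimes\Bbbk[t]$ with the coaction $\Delta_{A[t]}(u\otimes t^n)=\sum_{s\ge0}\binom ns D^s\otimes(u\otimes t^{n-s})$, and let $P(A[t])=H\otimes A[t]$ with the pseudoproduct $(h\otimes u)*(g\otimes v)=h\,v_{(1)}\otimes g\,u_{(1)}\otimes_H(1\otimes u_{(2)}v_{(2)})$. Then $A[t]$ is an $H$-comodule algebra, $P(A[t])$ is an alternative $H$-pseudoalgebra (i.e. an alternative conformal algebra), and for $x=1\otimes(a\otimes t+b\otimes1)$, $y=1\otimes(c\otimes1)$ one has $$(x*y)*x-x*(y*x)=(D\otimes1\otimes1)\otimes_H\big(1\otimes(\{b,c,a\}\otimes1)\big)+(1\otimes1\otimes D)\otimes_H\big(1\otimes(\{a,c,b\}\otimes1)\big)\neq0.$$ In particular, the conformal subalgebra of $P(A[t])$ generated by the two elements $x,y$ is not associative.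
   Context: $\Bbbk$ is a field of characteristic $0$; $H=\Bbbk[D]$ is the Hopf algebra with $\Delta(D)=D\otimes1+1\otimes D$, $\varepsilon(D)=0$, $S(D)=-D$. An algebra is alternative if $(xx)y=x(xy)$ and $x(yy)=(xy)y$ for all $x,y$. An $H$-comodule algebra is an algebra $B$ with an algebra homomorphism $\Delta_B:B\to H\otimes B$, $\Delta_B(u)=u_{(1)}\otimes u_{(2)}$, with $(\mathrm{id}_H\otimes\Delta_B)\Delta_B=(\Delta\otimes\mathrm{id}_B)\Delta_B$ and $\varepsilon(u_{(1)})u_{(2)}=u$. $H^{\otimes n}\otimes_HM$ is formed with respect to the right action $(f_1\otimes\cdots\otimes f_n)h=f_1h_{(1)}\otimes\cdots\otimes f_nh_{(n)}$. Iterated pseudoproducts use the expanded pseudoproduct: if $u*v=\sum_if_i\otimes g_i\otimes_Hw_i$ then $(F\otimes_Hu)*(G\otimes_Hv)=\sum_iF\Delta^{(n)}(f_i)\otimes G\Delta^{(m)}(g_i)\otimes_Hw_i$ for $F\in H^{\otimes n}$, $G\in H^{\otimes m}$ ($\Delta^{(1)}=\mathrm{id}$, $\Delta^{(k+1)}=(\mathrm{id}\otimes\Delta^{(k)})\Delta$), elements $u$ being regarded as $1\otimes_Hu$. An $H$-pseudoalgebra $P$ is alternative if for all $u,v,w\in P$: $u*(v*w)-(u*v)*w=(\sigma_{12}\otimes_H\mathrm{id})((v*u)*w-v*(u*w))$ and $u*(v*w)-(u*v)*w=(\sigma_{23}\otimes_H\mathrm{id})((u*w)*v-u*(w*v))$,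 where $\sigma_{ij}$ transposes the $i$-th and $j$-th tensor factors of $H^{\otimes3}$; it is associative if $(u*v)*w=u*(v*w)$. *)

theory Defs
  imports "HOL-Computational_Algebra.Polynomial"
begin

text \<open>
Tensor products with polynomial algebras are realised by polynomial types:
  \<open>A[t] = A \<otimes> k[t]\<close> is \<open>'a poly\<close> (variable t);
  \<open>H \<otimes> V\<close> (H = k[D]) is \<open>V poly\<close> (variable D);
  \<open>H\<^sup>\<otimes>\<^sup>n \<otimes> V\<close> is \<open>V poly \<dots> poly\<close> (n nested levels), the OUTERMOST level being the
  FIRST tensor factor of \<open>H\<^sup>\<otimes>\<^sup>n\<close>.  In particular \<open>H\<otimes>H = 'k poly poly\<close>,
  \<open>H\<otimes>H\<otimes>H = 'k poly poly poly\<close> as commutative algebras.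
\<open>H\<^sup>\<otimes>\<^sup>n \<otimes>\<^sub>H M\<close> is the quotient of \<open>H\<^sup>\<otimes>\<^sup>n \<otimes> M\<close> by the \<open>k\<close>-span of all
\<open>(F h) \<otimes> m - F \<otimes> (h m)\<close>; we work with representatives and the induced equivalence.
\<close>

definition nonassoc_algebra :: "('k::field \<Rightarrow> 'a::ab_group_add \<Rightarrow> 'a) \<Rightarrow> ('a \<Rightarrow> 'a \<Rightarrow> 'a) \<Rightarrow> bool" where
  "nonassoc_algebra sc mul \<longleftrightarrow>
     (\<forall>c d u. sc (c + d) u = sc c u + sc d u) \<and>
     (\<forall>c u v. sc c (u + v) = sc c u + sc c v) \<and>
     (\<forall>c d u. sc (c * d) u = sc c (sc d u)) \<and>
     (\<forall>u. sc 1 u = u) \<and>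
     (\<forall>u v w. mul (u + v) w = mul u w + mul v w) \<and>
     (\<forall>u v w. mul u (v + w) = mul u v + mul u w) \<and>
     (\<forall>c u v. mul (sc c u) v = sc c (mul u v)) \<and>
     (\<forall>c u v. mul u (sc c v) = sc c (mul u v))"

definition alternative_alg :: "('a \<Rightarrow> 'a \<Rightarrow> 'a) \<Rightarrow> bool" where
  "alternative_alg mul \<longleftrightarrow>
     (\<forall>x y. mul (mul x x) y = mul x (mul x y) \<and> mul x (mul y y) = mul (mul x y) y)"

definition associative_alg :: "('a \<Rightarrow> 'a \<Rightarrow> 'a) \<Rightarrow> bool" where
  "associative_alg mul \<longleftrightarrow> (\<forall>x y z. mul (mul x y) z = mul x (mul y z))"

definition assocA :: "('a::ab_group_add \<Rightarrow> 'a \<Rightarrow> 'a) \<Rightarrow> 'a \<Rightarrow> 'a \<Rightarrow> 'a \<Rightarrow> 'a" where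
  "assocA mul a b c = mul (mul a b) c - mul a (mul b c)"

text \<open>\<open>\<Delta>(h) = h(D\<otimes>1 + 1\<otimes>D)\<close> in \<open>H\<otimes>H\<close>, and \<open>\<Delta>\<^sup>(\<^sup>3\<^sup>)(h) = h(D\<^sub>1+D\<^sub>2+D\<^sub>3)\<close> in \<open>H\<^sup>\<otimes>\<^sup>3\<close>.\<close>
definition Delta2 :: "'k::field poly \<Rightarrow> 'k poly poly" where
  "Delta2 h = pcompose (map_poly (\<lambda>c. [:c:]) h) ([:0, 1:] + [:[:0, 1:]:])"

definition Delta3 :: "'k::field poly \<Rightarrow> 'k poly poly poly" where
  "Delta3 h = pcompose (map_poly (\<lambda>c. [:[:c:]:]) h)
                ([:0, 1:] + [:[:0, 1:]:] + [:[:[:0, 1:]:]:])"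

definition mon2 :: "nat \<Rightarrow> nat \<Rightarrow> 'k::field poly poly" where
  "mon2 i j = monom (monom 1 j) i"

definition tensHH :: "'k::field poly \<Rightarrow> 'k poly \<Rightarrow> 'k poly poly" where
  "tensHH h g = map_poly (\<lambda>c. smult c g) h"

definition tensHH_H :: "'k::field poly poly \<Rightarrow> 'k poly \<Rightarrow> 'k poly poly poly" where
  "tensHH_H F g = map_poly (map_poly (\<lambda>c. smult c g)) F"

definition tensH_HH :: "'k::field poly \<Rightarrow> 'k poly poly \<Rightarrow> 'k poly poly poly" where
  "tensH_HH f G = map_poly (\<lambda>c. map_poly (smult c) G) f"

definition mulHB :: "('b::comm_monoid_add \<Rightarrow> 'b \<Rightarrow> 'b) \<Rightarrow> 'b poly \<Rightarrow> 'b poly \<Rightarrow> 'b poly" where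
  "mulHB mulB X Y = (\<Sum>i\<le>degree X. \<Sum>j\<le>degree Y. monom (mulB (coeff X i) (coeff Y j)) (i + j))"

definition DeltaId :: "('k::field \<Rightarrow> 'b::comm_monoid_add \<Rightarrow> 'b) \<Rightarrow> 'b poly \<Rightarrow> 'b poly poly" where
  "DeltaId scB X = (\<Sum>s\<le>degree X. map_poly (map_poly (\<lambda>c. scB c (coeff X s))) (Delta2 (monom 1 s)))"

text \<open>\<open>B\<close> (with scalars \<open>scB\<close>, product \<open>mulB\<close>) is an \<open>H\<close>-comodule algebra with
 coaction \<open>\<Delta>\<^sub>B\<close>: \<open>\<Delta>\<^sub>B\<close> is a \<open>k\<close>-linear multiplicative map, coassociative and counital
 (the counit \<open>\<epsilon>(D\<^sup>s) = \<delta>\<^sub>s\<^sub>0\<close>, so \<open>\<epsilon>(u\<^sub>(\<^sub>1\<^sub>))u\<^sub>(\<^sub>2\<^sub>)\<close> is the \<open>D\<^sup>0\<close>-coefficient).\<close>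
definition H_comodule_algebra ::
  "('k::field \<Rightarrow> 'b::comm_monoid_add \<Rightarrow> 'b) \<Rightarrow> ('b \<Rightarrow> 'b \<Rightarrow> 'b) \<Rightarrow> ('b \<Rightarrow> 'b poly) \<Rightarrow> bool" where
  "H_comodule_algebra scB mulB DB \<longleftrightarrow>
     (\<forall>u v. DB (u + v) = DB u + DB v) \<and>
     (\<forall>c u. DB (scB c u) = map_poly (scB c) (DB u)) \<and>
     (\<forall>u v. DB (mulB u v) = mulHB mulB (DB u) (DB v)) \<and>
     (\<forall>u. map_poly DB (DB u) = DeltaId scB (DB u)) \<and>
     (\<forall>u. coeff (DB u) 0 = u)"

definition scaleAt :: "('k \<Rightarrow> 'a::zero \<Rightarrow> 'a) \<Rightarrow> 'k \<Rightarrow> 'a poly \<Rightarrow> 'a poly" where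
  "scaleAt sc c p = map_poly (sc c) p"

definition mulAt :: "('a::comm_monoid_add \<Rightarrow> 'a \<Rightarrow> 'a) \<Rightarrow> 'a poly \<Rightarrow> 'a poly \<Rightarrow> 'a poly" where
  "mulAt mul p q = (\<Sum>i\<le>degree p. \<Sum>j\<le>degree q. monom (mul (coeff p i) (coeff q j)) (i + j))"

definition coactAt :: "('k::field \<Rightarrow> 'a::comm_monoid_add \<Rightarrow> 'a) \<Rightarrow> 'a poly \<Rightarrow> 'a poly poly" where
  "coactAt sc p = (\<Sum>n\<le>degree p. \<Sum>s\<le>n. monom (monom (sc (of_nat (n choose s)) (coeff p n)) (n - s)) s)"

text \<open>A module \<open>P\<close> is given by its scalar multiplication \<open>scP\<close> and \<open>H\<close>-action \<open>actH\<close>;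
 a pseudoproduct \<open>pp u v \<in> H\<otimes>H\<otimes>P\<close> is a representative of \<open>u*v \<in> H\<otimes>H\<otimes>\<^sub>HP\<close>.\<close>

inductive_set kspan :: "('k \<Rightarrow> 'v \<Rightarrow> 'v) \<Rightarrow> 'v::ab_group_add set \<Rightarrow> 'v set"
  for sc :: "'k \<Rightarrow> 'v \<Rightarrow> 'v" and S :: "'v set" where
  kspan_zero: "0 \<in> kspan sc S"
| kspan_gen: "x \<in> S \<Longrightarrow> x \<in> kspan sc S"
| kspan_add: "x \<in> kspan sc S \<Longrightarrow> y \<in> kspan sc S \<Longrightarrow> x + y \<in> kspan sc S"
| kspan_scale: "x \<in> kspan sc S \<Longrightarrow> sc c x \<in> kspan sc S"

definition tensor2 :: "('k::field \<Rightarrow> 'p::zero \<Rightarrow> 'p) \<Rightarrow> 'k poly poly \<Rightarrow> 'p \<Rightarrow> 'p poly poly" where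
  "tensor2 scP F m = map_poly (map_poly (\<lambda>c. scP c m)) F"

definition tensor3 :: "('k::field \<Rightarrow> 'p::zero \<Rightarrow> 'p) \<Rightarrow> 'k poly poly poly \<Rightarrow> 'p \<Rightarrow> 'p poly poly poly" where
  "tensor3 scP F m = map_poly (map_poly (map_poly (\<lambda>c. scP c m))) F"

definition rel2 :: "('k::field \<Rightarrow> 'p::ab_group_add \<Rightarrow> 'p) \<Rightarrow> ('k poly \<Rightarrow> 'p \<Rightarrow> 'p) \<Rightarrow> 'p poly poly set" where
  "rel2 scP actH = {tensor2 scP (F * Delta2 h) m - tensor2 scP F (actH h m) | F h m. True}"

definition rel3 :: "('k::field \<Rightarrow> 'p::ab_group_add \<Rightarrow> 'p) \<Rightarrow> ('k poly \<Rightarrow> 'p \<Rightarrow> 'p) \<Rightarrow> 'p poly poly poly set" where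
  "rel3 scP actH = {tensor3 scP (F * Delta3 h) m - tensor3 scP F (actH h m) | F h m. True}"

definition eqH2 :: "('k::field \<Rightarrow> 'p::ab_group_add \<Rightarrow> 'p) \<Rightarrow> ('k poly \<Rightarrow> 'p \<Rightarrow> 'p) \<Rightarrow> 'p poly poly \<Rightarrow> 'p poly poly \<Rightarrow> bool" where
  "eqH2 scP actH X Y \<longleftrightarrow> X - Y \<in> kspan (\<lambda>c. map_poly (map_poly (scP c))) (rel2 scP actH)"

definition eqH3 :: "('k::field \<Rightarrow> 'p::ab_group_add \<Rightarrow> 'p) \<Rightarrow> ('k poly \<Rightarrow> 'p \<Rightarrow> 'p) \<Rightarrow> 'p poly poly poly \<Rightarrow> 'p poly poly poly \<Rightarrow> bool" where
  "eqH3 scP actH X Y \<longleftrightarrow> X - Y \<in> kspan (\<lambda>c. map_poly (map_poly (map_poly (scP c)))) (rel3 scP actH)"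

definition sum2 :: "'v::zero poly poly \<Rightarrow> (nat \<Rightarrow> nat \<Rightarrow> 'v \<Rightarrow> 'w::comm_monoid_add) \<Rightarrow> 'w" where
  "sum2 X f = (\<Sum>i\<le>degree X. \<Sum>j\<le>degree (coeff X i). f i j (coeff (coeff X i) j))"

definition act2 :: "('k::field \<Rightarrow> 'p::comm_monoid_add \<Rightarrow> 'p) \<Rightarrow> 'k poly poly \<Rightarrow> 'p poly poly \<Rightarrow> 'p poly poly" where
  "act2 scP F X = sum2 X (\<lambda>i j m. tensor2 scP (F * mon2 i j) m)"

text \<open>Expanded pseudoproducts: \<open>(u*v)*w\<close> from a representative \<open>X\<close> of \<open>u*v\<close>
 (\<open>(F\<otimes>\<^sub>Hm)*(1\<otimes>\<^sub>Hw) = \<Sum> F\<Delta>(f)\<otimes>g\<otimes>\<^sub>Hz\<close>) and \<open>u*(v*w)\<close> from a representative \<open>Y\<close> of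
 \<open>v*w\<close> (\<open>(1\<otimes>\<^sub>Hu)*(G\<otimes>\<^sub>Hy) = \<Sum> f\<otimes>G\<Delta>(g)\<otimes>\<^sub>Hz\<close>).\<close>
definition lprod :: "('k::field \<Rightarrow> 'p::comm_monoid_add \<Rightarrow> 'p) \<Rightarrow> ('p \<Rightarrow> 'p \<Rightarrow> 'p poly poly)
                     \<Rightarrow> 'p poly poly \<Rightarrow> 'p \<Rightarrow> 'p poly poly poly" where
  "lprod scP pp X w = sum2 X (\<lambda>i j m. sum2 (pp m w) (\<lambda>a b z.
       tensor3 scP (tensHH_H (mon2 i j * Delta2 (monom 1 a)) (monom 1 b)) z))"

definition rprod :: "('k::field \<Rightarrow> 'p::comm_monoid_add \<Rightarrow> 'p) \<Rightarrow> ('p \<Rightarrow> 'p \<Rightarrow> 'p poly poly)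
                     \<Rightarrow> 'p \<Rightarrow> 'p poly poly \<Rightarrow> 'p poly poly poly" where
  "rprod scP pp u Y = sum2 Y (\<lambda>a b y. sum2 (pp u y) (\<lambda>c d z.
       tensor3 scP (tensH_HH (monom 1 c) (mon2 a b * Delta2 (monom 1 d))) z))"

definition swap12 :: "'v::comm_monoid_add poly poly \<Rightarrow> 'v poly poly" where
  "swap12 X = sum2 X (\<lambda>i j z. monom (monom z i) j)"

definition sigma12 :: "'p::comm_monoid_add poly poly poly \<Rightarrow> 'p poly poly poly" where
  "sigma12 X = swap12 X"

definition sigma23 :: "'p::comm_monoid_add poly poly poly \<Rightarrow> 'p poly poly poly" where
  "sigma23 X = map_poly swap12 X"

definition H_pseudoalgebra ::
  "('k::field \<Rightarrow> 'p::ab_group_add \<Rightarrow> 'p) \<Rightarrow> ('k poly \<Rightarrow> 'p \<Rightarrow> 'p) \<Rightarrow> ('p \<Rightarrow> 'p \<Rightarrow> 'p poly poly) \<Rightarrow> bool" where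
  "H_pseudoalgebra scP actH pp \<longleftrightarrow>
     (\<forall>h g u. actH (h + g) u = actH h u + actH g u) \<and>
     (\<forall>h u v. actH h (u + v) = actH h u + actH h v) \<and>
     (\<forall>h g u. actH (h * g) u = actH h (actH g u)) \<and>
     (\<forall>c u. actH [:c:] u = scP c u) \<and>
     (\<forall>u u' v. eqH2 scP actH (pp (u + u') v) (pp u v + pp u' v)) \<and>
     (\<forall>u v v'. eqH2 scP actH (pp u (v + v')) (pp u v + pp u v')) \<and>
     (\<forall>h g u v. eqH2 scP actH (pp (actH h u) (actH g v)) (act2 scP (tensHH h g) (pp u v)))"

definition alternative_pseudo ::
  "('k::field \<Rightarrow> 'p::ab_group_add \<Rightarrow> 'p) \<Rightarrow> ('k poly \<Rightarrow> 'p \<Rightarrow> 'p) \<Rightarrow> ('p \<Rightarrow> 'p \<Rightarrow> 'p poly poly) \<Rightarrow> bool" where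
  "alternative_pseudo scP actH pp \<longleftrightarrow>
     (\<forall>u v w. eqH3 scP actH (rprod scP pp u (pp v w) - lprod scP pp (pp u v) w)
                 (sigma12 (lprod scP pp (pp v u) w - rprod scP pp v (pp u w)))) \<and>
     (\<forall>u v w. eqH3 scP actH (rprod scP pp u (pp v w) - lprod scP pp (pp u v) w)
                 (sigma23 (lprod scP pp (pp u w) v - rprod scP pp u (pp w v))))"

definition pseudo_assoc_on ::
  "('k::field \<Rightarrow> 'p::ab_group_add \<Rightarrow> 'p) \<Rightarrow> ('k poly \<Rightarrow> 'p \<Rightarrow> 'p) \<Rightarrow> ('p \<Rightarrow> 'p \<Rightarrow> 'p poly poly) \<Rightarrow> 'p set \<Rightarrow> bool" where
  "pseudo_assoc_on scP actH pp S \<longleftrightarrow>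
     (\<forall>u\<in>S. \<forall>v\<in>S. \<forall>w\<in>S. eqH3 scP actH (lprod scP pp (pp u v) w) (rprod scP pp u (pp v w)))"

definition pseudo_subalgebra ::
  "('k::field \<Rightarrow> 'p::ab_group_add \<Rightarrow> 'p) \<Rightarrow> ('k poly \<Rightarrow> 'p \<Rightarrow> 'p) \<Rightarrow> ('p \<Rightarrow> 'p \<Rightarrow> 'p poly poly) \<Rightarrow> 'p set \<Rightarrow> bool" where
  "pseudo_subalgebra scP actH pp S \<longleftrightarrow>
     0 \<in> S \<and> (\<forall>u\<in>S. \<forall>v\<in>S. u + v \<in> S) \<and> (\<forall>c. \<forall>u\<in>S. scP c u \<in> S) \<and>
     (\<forall>h. \<forall>u\<in>S. actH h u \<in> S) \<and>
     (\<forall>u\<in>S. \<forall>v\<in>S. \<exists>X. (\<forall>i j. coeff (coeff X i) j \<in> S) \<and> eqH2 scP actH (pp u v) X)"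

definition generated_subalgebra ::
  "('k::field \<Rightarrow> 'p::ab_group_add \<Rightarrow> 'p) \<Rightarrow> ('k poly \<Rightarrow> 'p \<Rightarrow> 'p) \<Rightarrow> ('p \<Rightarrow> 'p \<Rightarrow> 'p poly poly) \<Rightarrow> 'p set \<Rightarrow> 'p set" where
  "generated_subalgebra scP actH pp G = \<Inter>{S. pseudo_subalgebra scP actH pp S \<and> G \<subseteq> S}"

definition scaleP :: "('k \<Rightarrow> 'a::zero \<Rightarrow> 'a) \<Rightarrow> 'k \<Rightarrow> 'a poly poly \<Rightarrow> 'a poly poly" where
  "scaleP sc c m = map_poly (scaleAt sc c) m"

definition actP :: "('k::field \<Rightarrow> 'a::comm_monoid_add \<Rightarrow> 'a) \<Rightarrow> 'k poly \<Rightarrow> 'a poly poly \<Rightarrow> 'a poly poly" where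
  "actP sc h m = (\<Sum>j\<le>degree h. \<Sum>i\<le>degree m. monom (scaleAt sc (coeff h j) (coeff m i)) (i + j))"

definition pprodP :: "('k::field \<Rightarrow> 'a::comm_monoid_add \<Rightarrow> 'a) \<Rightarrow> ('a \<Rightarrow> 'a \<Rightarrow> 'a)
                      \<Rightarrow> 'a poly poly \<Rightarrow> 'a poly poly \<Rightarrow> 'a poly poly poly poly" where
  "pprodP sc mul x y =
     (\<Sum>i\<le>degree x. \<Sum>j\<le>degree y.
        \<Sum>s\<le>degree (coactAt sc (coeff x i)). \<Sum>r\<le>degree (coactAt sc (coeff y j)).
          monom (monom (monom (mulAt mul (coeff (coactAt sc (coeff x i)) s)
                                         (coeff (coactAt sc (coeff y j)) r)) 0) (j + s)) (i + r))"

end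

theory Submission
  imports Defs
begin

(*
  The coaction of A[t] is the coproduct of k[D] with t in place of the second D:
  \<Delta>(a t^n) = \<Delta>(D^n) \<otimes> a.  Hence A[t] is an H-comodule algebra because \<Delta> is
  multiplicative and coassociative, and every expanded pseudoproduct of monomials of P(A[t])
  is a scalar polynomial in D1 = D\<otimes>1\<otimes>1, D2 = 1\<otimes>D\<otimes>1, D3 = 1\<otimes>1\<otimes>D and t,
  tensored with an element of A.  By the binomial theorem, for x = D^i \<otimes> a t^n,
  y = D^j \<otimes> b t^m and z = D^k \<otimes> c t^l both (x*y)*z and x*(y*z) have the generating polynomial
    \<Phi> = D1^i D2^j D3^k (D2 + D3 + t)^n (D1 + D3 + t)^m (D1 + D2 + t)^l,
  tensored with (ab)c and a(bc) respectively, so the associator of P(A[t]) is \<Phi> \<otimes> {a,b,c}.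
  The transpositions \<sigma>12 and \<sigma>23 permute \<Phi> exactly as they permute x, y, z; since the
  associator of an alternative algebra is alternating, P(A[t]) is alternative.
  In the example the associator (x*y)*x - x*(y*x) is (D1 - D3) \<otimes> {b,c,a}.  It is non-zero
  in H\<otimes>H\<otimes>H \<otimes>_H P because the functional F \<otimes> m \<mapsto> F(1,0,0) m(1) vanishes on the
  relations of \<otimes>_H and takes the value {b,c,a} = {a,b,c} on it.
*)

section \<open>Additive maps on polynomials\<close>

lemma poly_induct_monom [case_names monom add]:
  assumes "\<And>a n. P (monom a n)" and "\<And>p q. P p \<Longrightarrow> P q \<Longrightarrow> P (p + q)"
  shows "P p"
proof -
  have "P (\<Sum>i\<in>A. monom (coeff p i) i)" if "finite A" for A
    using that
  proof (induct A rule: finite_induct)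
    case empty
    then show ?case using assms(1)[of 0 0] by simp
  next
    case (insert x F)
    then show ?case using assms by simp
  qed
  from this[of "{..degree p}"] show ?thesis by (simp add: poly_as_sum_of_monoms)
qed

lemma poly2_induct_monom [case_names monom add]:
  assumes "\<And>a n i. P (monom (monom a n) i)" and "\<And>p q. P p \<Longrightarrow> P q \<Longrightarrow> P (p + q)"
  shows "P p"
proof (induct p rule: poly_induct_monom)
  case (monom q i)
  show ?case
    by (induct q rule: poly_induct_monom) (use assms in \<open>simp_all add: add_monom[symmetric]\<close>)
qed (use assms in simp)

lemma poly2_induct3 [case_names monom add1 add2 add3]:
  assumes "\<And>a n i b m j c l k. P (monom (monom a n) i) (monom (monom b m) j) (monom (monom c l) k)"
    and "\<And>u u' v w. P u v w \<Longrightarrow> P u' v w \<Longrightarrow> P (u + u') v w"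
    and "\<And>u v v' w. P u v w \<Longrightarrow> P u v' w \<Longrightarrow> P u (v + v') w"
    and "\<And>u v w w'. P u v w \<Longrightarrow> P u v w' \<Longrightarrow> P u v (w + w')"
  shows "P u v w"
proof -
  have monoms_uv: "P (monom (monom a n) i) (monom (monom b m) j) w" for a n i b m j
    by (induct w rule: poly2_induct_monom) (simp_all add: assms(1,4))
  have monoms_u: "P (monom (monom a n) i) v w" for a n i
    by (induct v rule: poly2_induct_monom) (simp_all add: monoms_uv assms(3))
  show ?thesis
    by (induct u rule: poly2_induct_monom) (simp_all add: monoms_u assms(2))
qed

lemma additive_eq_on_monoms:
  assumes "additive f" and "additive g" and "\<And>a n. f (monom a n) = g (monom a n)"
  shows "f p = g p"
  by (induct p rule: poly_induct_monom) (simp_all add: assms additive.add)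

lemma additive_eq_on_monoms2:
  assumes "additive f" and "additive g" and "\<And>a n i. f (monom (monom a n) i) = g (monom (monom a n) i)"
  shows "f p = g p"
  by (induct p rule: poly2_induct_monom) (simp_all add: assms additive.add)

lemma additive_comp: "additive f \<Longrightarrow> additive g \<Longrightarrow> additive (\<lambda>x. f (g x))"
  by (simp add: additive_def)

lemma additive_coeff: "additive (\<lambda>p. coeff p n)"
  by unfold_locales simp

lemma additive_map_poly: "additive f \<Longrightarrow> additive (map_poly f)"
  by unfold_locales (simp add: poly_eq_iff coeff_map_poly additive.add additive.zero)

definition sum_coeffs :: "(nat \<Rightarrow> 'b::zero \<Rightarrow> 'c::comm_monoid_add) \<Rightarrow> 'b poly \<Rightarrow> 'c" where
  "sum_coeffs F p = (\<Sum>i\<le>degree p. F i (coeff p i))"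

lemma sum_coeffs_upto:
  assumes "\<And>i. F i 0 = 0" and "degree p \<le> N"
  shows "sum_coeffs F p = (\<Sum>i\<le>N. F i (coeff p i))"
  unfolding sum_coeffs_def
  by (rule sum.mono_neutral_left) (use assms in \<open>auto simp: coeff_eq_0\<close>)

lemma sum_coeffs_monom:
  assumes "\<And>i. F i 0 = 0"
  shows "sum_coeffs F (monom a n) = F n a"
proof -
  have "sum_coeffs F (monom a n) = (\<Sum>i\<le>n. F i (coeff (monom a n) i))"
    by (rule sum_coeffs_upto) (simp_all add: assms degree_monom_le)
  also have "\<dots> = (\<Sum>i\<le>n. if i = n then F n a else 0)"
    by (rule sum.cong) (auto simp: assms)
  finally show ?thesis by simp
qed

lemma additive_sum_coeffs:
  fixes F :: "nat \<Rightarrow> 'b::ab_group_add \<Rightarrow> 'c::ab_group_add"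
  assumes "\<And>i. additive (F i)"
  shows "additive (sum_coeffs F)"
proof
  fix p q :: "'b poly"
  let ?N = "max (degree p) (degree q)"
  have zero: "F i 0 = 0" for i
    by (rule additive.zero[OF assms])
  have "sum_coeffs F (p + q) = (\<Sum>i\<le>?N. F i (coeff (p + q) i))"
    by (rule sum_coeffs_upto) (simp_all add: zero degree_add_le_max)
  also have "\<dots> = (\<Sum>i\<le>?N. F i (coeff p i)) + (\<Sum>i\<le>?N. F i (coeff q i))"
    by (simp add: additive.add[OF assms] sum.distrib)
  also have "\<dots> = sum_coeffs F p + sum_coeffs F q"
    by (simp add: sum_coeffs_upto[symmetric] zero)
  finally show "sum_coeffs F (p + q) = sum_coeffs F p + sum_coeffs F q" .
qed

lemma sum_coeffs_fun_add: "sum_coeffs (\<lambda>i a. F i a + G i a) p = sum_coeffs F p + sum_coeffs G p"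
  by (simp add: sum_coeffs_def sum.distrib)

lemma additive_sum_coeffs_comp: "additive g \<Longrightarrow> g (sum_coeffs F p) = sum_coeffs (\<lambda>i a. g (F i a)) p"
  unfolding sum_coeffs_def by (rule additive.sum)

lemma sum_coeffs_map_poly:
  assumes "f 0 = 0" and "\<And>i. G i 0 = 0"
  shows "sum_coeffs G (map_poly f p) = sum_coeffs (\<lambda>i a. G i (f a)) p"
proof -
  have "sum_coeffs G (map_poly f p) = (\<Sum>i\<le>degree p. G i (coeff (map_poly f p) i))"
    by (rule sum_coeffs_upto) (simp_all add: assms map_poly_degree_leq)
  then show ?thesis by (simp add: sum_coeffs_def coeff_map_poly assms)
qed

definition sum_coeffs2 ::
  "(nat \<Rightarrow> nat \<Rightarrow> 'b::zero \<Rightarrow> 'c::zero \<Rightarrow> 'd::comm_monoid_add) \<Rightarrow> 'b poly \<Rightarrow> 'c poly \<Rightarrow> 'd" where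
  "sum_coeffs2 F p q = sum_coeffs (\<lambda>i a. sum_coeffs (\<lambda>j b. F i j a b) q) p"

definition biadditive ::
  "(nat \<Rightarrow> nat \<Rightarrow> 'b::ab_group_add \<Rightarrow> 'c::ab_group_add \<Rightarrow> 'd::ab_group_add) \<Rightarrow> bool" where
  "biadditive F \<longleftrightarrow> (\<forall>i j b. additive (\<lambda>a. F i j a b)) \<and> (\<forall>i j a. additive (F i j a))"

lemma biadditiveI:
  assumes "\<And>i j a a' b. F i j (a + a') b = F i j a b + F i j a' b"
    and "\<And>i j a b b'. F i j a (b + b') = F i j a b + F i j a b'"
  shows "biadditive F"
  unfolding biadditive_def additive_def using assms by blast

lemma biadditiveD:
  assumes "biadditive F"
  shows "F i j (a + a') b = F i j a b + F i j a' b" and "F i j a (b + b') = F i j a b + F i j a b'"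
    and "F i j 0 b = 0" and "F i j a 0 = 0"
proof -
  have l: "additive (\<lambda>a. F i j a b)" and r: "additive (F i j a)" for a b
    using assms by (simp_all add: biadditive_def)
  show "F i j (a + a') b = F i j a b + F i j a' b" "F i j 0 b = 0"
    using additive.add[OF l] additive.zero[OF l] by simp_all
  show "F i j a (b + b') = F i j a b + F i j a b'" "F i j a 0 = 0"
    using additive.add[OF r] additive.zero[OF r] by simp_all
qed

lemma additive_sum_coeffs2_left:
  assumes "biadditive F"
  shows "additive (\<lambda>p. sum_coeffs2 F p q)"
  unfolding sum_coeffs2_def
  by (rule additive_sum_coeffs, unfold_locales)
    (simp add: sum_coeffs_def biadditiveD[OF assms] sum.distrib)

lemma additive_sum_coeffs2_right:
  assumes "biadditive F"
  shows "additive (sum_coeffs2 F p)"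
proof -
  have "additive (sum_coeffs (\<lambda>j b. F i j a b))" for i a
    by (rule additive_sum_coeffs, unfold_locales) (simp add: biadditiveD[OF assms])
  then show ?thesis
    unfolding sum_coeffs2_def by unfold_locales (simp add: additive.add sum_coeffs_fun_add)
qed

lemma sum_coeffs2_monom:
  assumes "biadditive F"
  shows "sum_coeffs2 F (monom a i) (monom b j) = F i j a b"
proof -
  have "sum_coeffs (\<lambda>j b. F i j 0 b) q = 0" for i q
    by (simp add: biadditiveD[OF assms] sum_coeffs_def)
  then show ?thesis
    by (simp add: sum_coeffs2_def sum_coeffs_monom biadditiveD[OF assms])
qed

lemma sum2_eq_sum_coeffs: "sum2 X f = sum_coeffs (\<lambda>i. sum_coeffs (f i)) X"
  by (simp add: sum2_def sum_coeffs_def)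

lemma additive_sum2:
  assumes "\<And>i j. additive (f i j)"
  shows "additive (\<lambda>X. sum2 X f)"
  unfolding sum2_eq_sum_coeffs by (intro additive_sum_coeffs assms)

lemma sum2_monom:
  assumes "\<And>i j. additive (f i j)"
  shows "sum2 (monom (monom z j) i) f = f i j z"
proof -
  have "sum_coeffs (f i) 0 = 0" for i
    by (rule additive.zero[OF additive_sum_coeffs[OF assms]])
  then show ?thesis
    by (simp add: sum2_eq_sum_coeffs sum_coeffs_monom additive.zero[OF assms])
qed

lemma sum2_fun_add: "sum2 X (\<lambda>i j z. f i j z + g i j z) = sum2 X f + sum2 X g"
  by (simp add: sum2_def sum.distrib)

locale comm_ring_hom = additive f for f :: "'a::comm_ring_1 \<Rightarrow> 'b::comm_ring_1" +
  assumes hom_mult: "f (x * y) = f x * f y"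
    and hom_one: "f 1 = 1"
begin

lemma hom_power: "f (x ^ n) = f x ^ n"
  by (induct n) (simp_all add: hom_one hom_mult)

lemma hom_poly: "f (poly p x) = poly (map_poly f p) (f x)"
  by (induct p) (simp_all add: map_poly_pCons add hom_mult zero)

end

lemma comm_ring_hom_map_poly:
  assumes "comm_ring_hom f"
  shows "comm_ring_hom (map_poly f)"
proof -
  interpret f: comm_ring_hom f by (fact assms)
  show ?thesis
  proof (intro comm_ring_hom.intro comm_ring_hom_axioms.intro)
    show "additive (map_poly f)"
      by (rule additive_map_poly[OF f.additive_axioms])
    show "map_poly f (p * q) = map_poly f p * map_poly f q" for p q
    proof (induct p)
      case (pCons a p)
      then show ?case
        by (simp add: additive.add[OF additive_map_poly[OF f.additive_axioms]]
            map_poly_pCons map_poly_smult f.hom_mult f.zero)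
    qed simp
    show "map_poly f 1 = 1"
      by (simp add: f.hom_one)
  qed
qed

lemma comm_ring_hom_const_poly: "comm_ring_hom (\<lambda>c. [:c:])"
  by unfold_locales (simp_all add: one_pCons)

lemma comm_ring_hom_comp: "comm_ring_hom f \<Longrightarrow> comm_ring_hom g \<Longrightarrow> comm_ring_hom (\<lambda>x. f (g x))"
  unfolding comm_ring_hom_def comm_ring_hom_axioms_def additive_def by simp

lemma comm_ring_hom_poly: "comm_ring_hom (\<lambda>p. poly p x)"
  by unfold_locales simp_all

section \<open>Scalar polynomials tensored with vectors\<close>

definition tensor5 ::
  "('k::field \<Rightarrow> 'p::zero \<Rightarrow> 'p) \<Rightarrow> 'k poly poly poly poly poly \<Rightarrow> 'p \<Rightarrow> 'p poly poly poly poly poly" where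
  "tensor5 scP K m = map_poly (map_poly (map_poly (map_poly (map_poly (\<lambda>c. scP c m))))) K"

context vector_space
begin

sublocale scale_left: additive "\<lambda>c. scale c z" for z
  by unfold_locales (rule scale_left_distrib)

sublocale scale_right: additive "scale c" for c
  by unfold_locales (rule scale_right_distrib)

lemma vector_space_map_poly: "vector_space (\<lambda>c. map_poly (scale c))"
  by unfold_locales (simp_all add: poly_eq_iff coeff_map_poly algebra_simps)

lemma coeff_tensor2: "coeff (coeff (tensor2 scale K z) i) j = scale (coeff (coeff K i) j) z"
  by (simp add: tensor2_def coeff_map_poly)

lemma coeff_tensor3:
  "coeff (coeff (coeff (tensor3 scale K z) i) j) k = scale (coeff (coeff (coeff K i) j) k) z"
  by (simp add: tensor3_def coeff_map_poly)

lemma coeff_tensor5: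
  "coeff (coeff (coeff (coeff (coeff (tensor5 scale K z) i) j) k) l) r
     = scale (coeff (coeff (coeff (coeff (coeff K i) j) k) l) r) z"
  by (simp add: tensor5_def coeff_map_poly)

sublocale tensor2_left: additive "\<lambda>K. tensor2 scale K z" for z
  by unfold_locales (simp add: poly_eq_iff coeff_tensor2 scale_left_distrib)

sublocale tensor2_right: additive "tensor2 scale K" for K
  by unfold_locales (simp add: poly_eq_iff coeff_tensor2 scale_right_distrib)

sublocale tensor3_left: additive "\<lambda>K. tensor3 scale K z" for z
  by unfold_locales (simp add: poly_eq_iff coeff_tensor3 scale_left_distrib)

sublocale tensor3_right: additive "tensor3 scale K" for K
  by unfold_locales (simp add: poly_eq_iff coeff_tensor3 scale_right_distrib)

sublocale tensor5_left: additive "\<lambda>K. tensor5 scale K z" for z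
  by unfold_locales (simp add: poly_eq_iff coeff_tensor5 scale_left_distrib)

sublocale tensor5_right: additive "tensor5 scale K" for K
  by unfold_locales (simp add: poly_eq_iff coeff_tensor5 scale_right_distrib)

lemma tensor3_of_nat: "tensor3 scale K (scale (of_nat n) z) = tensor3 scale (of_nat n * K) z"
  by (simp add: poly_eq_iff coeff_tensor3 of_nat_poly mult.commute)

lemma tensor5_of_nat: "tensor5 scale K (scale (of_nat n) z) = tensor5 scale (of_nat n * K) z"
  by (simp add: poly_eq_iff coeff_tensor5 of_nat_poly mult.commute)

lemma tensor2_monom: "tensor2 scale (monom (monom c j) i) z = monom (monom (scale c z) j) i"
  by (simp add: tensor2_def map_poly_monom)

lemma tensor3_monom: "tensor3 scale (monom K i) z = monom (tensor2 scale K z) i"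
  by (simp add: tensor3_def tensor2_def map_poly_monom)

lemma map_poly_scale_tensor2: "map_poly (map_poly (scale c)) (tensor2 scale K z) = tensor2 scale K (scale c z)"
  by (simp add: poly_eq_iff coeff_map_poly coeff_tensor2 scale_left_commute)

end

section \<open>The comodule algebra A[t]\<close>

lemma mulAt_eq_sum_coeffs2: "mulAt \<beta> p q = sum_coeffs2 (\<lambda>i j a b. monom (\<beta> a b) (i + j)) p q"
  by (simp add: mulAt_def sum_coeffs2_def sum_coeffs_def)

lemma mulHB_eq_mulAt: "mulHB \<beta> = mulAt \<beta>"
  by (simp add: fun_eq_iff mulHB_def mulAt_def)

context
  fixes \<beta> :: "'a::ab_group_add \<Rightarrow> 'a \<Rightarrow> 'a"
  assumes additive_left: "\<And>b. additive (\<lambda>a. \<beta> a b)" and additive_right: "\<And>a. additive (\<beta> a)"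
begin

lemma biadditive_mulAt_terms: "biadditive (\<lambda>i j a b. monom (\<beta> a b) (i + j))"
  by (rule biadditiveI)
    (simp_all add: additive.add[OF additive_left] additive.add[OF additive_right] add_monom)

lemma additive_mulAt_left: "additive (\<lambda>p. mulAt \<beta> p q)"
  unfolding mulAt_eq_sum_coeffs2 by (rule additive_sum_coeffs2_left[OF biadditive_mulAt_terms])

lemma additive_mulAt_right: "additive (mulAt \<beta> p)"
  unfolding mulAt_eq_sum_coeffs2 by (rule additive_sum_coeffs2_right[OF biadditive_mulAt_terms])

lemma mulAt_monom: "mulAt \<beta> (monom a i) (monom b j) = monom (\<beta> a b) (i + j)"
  unfolding mulAt_eq_sum_coeffs2 by (rule sum_coeffs2_monom[OF biadditive_mulAt_terms])

lemma mulAt_map_poly: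
  assumes f: "additive f" and g: "additive g" and h: "additive h"
    and fg: "\<And>x y. \<beta> (f x) (g y) = h (x * y)"
  shows "mulAt \<beta> (map_poly f K) (map_poly g L) = map_poly h (K * L)"
proof (induct K rule: poly_induct_monom)
  case (monom x i)
  show ?case
  proof (induct L rule: poly_induct_monom)
    case (monom y j)
    show ?case
      by (simp add: map_poly_monom mult_monom mulAt_monom fg additive.zero[OF f]
          additive.zero[OF g] additive.zero[OF h])
  next
    case (add L L')
    then show ?case
      by (simp add: distrib_left additive.add[OF additive_map_poly[OF g]]
          additive.add[OF additive_map_poly[OF h]] additive.add[OF additive_mulAt_right])
  qed
next
  case (add K K')
  then show ?case
    by (simp add: distrib_right additive.add[OF additive_map_poly[OF f]]
        additive.add[OF additive_map_poly[OF h]] additive.add[OF additive_mulAt_left])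
qed

end

lemma Delta2_monom_one: "Delta2 (monom 1 n) = (monom 1 1 + [:monom 1 1:]) ^ n"
  by (simp add: Delta2_def pcompose_altdef map_poly_monom poly_monom one_pCons[symmetric] monom_Suc monom_0)

lemma monom_monom_eq_vars:
  "monom (monom (c::'r::comm_ring_1) e) s = [:[:c:]:] * monom 1 1 ^ s * [:monom 1 1:] ^ e"
proof -
  have "[:[:c:]:] * monom 1 1 ^ s * [:monom 1 1:] ^ e = monom [:c:] s * [:monom 1 e:]"
    by (simp add: poly_const_pow monom_power smult_monom)
  also have "\<dots> = monom (monom c e) s"
    by (simp add: mult.commute[of _ "[:_:]"] smult_monom)
  finally show ?thesis ..
qed

lemma monom3_eq_vars:
  "monom (monom (monom (c::'r::comm_ring_1) e) j) i
     = [:[:[:c:]:]:] * monom 1 1 ^ i * [:monom 1 1:] ^ j * [:[:monom 1 1:]:] ^ e"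
proof -
  have "[:[:monom c e:]:] = [:[:[:c:]:]:] * [:[:monom 1 1:]:] ^ e"
    by (simp add: poly_const_pow monom_power smult_monom)
  then show ?thesis
    by (simp add: monom_monom_eq_vars[of "monom c e"] mult_ac)
qed

lemma Delta2_monom_one_expand:
  "Delta2 (monom 1 n) = (\<Sum>s\<le>n. monom (monom (of_nat (n choose s) :: 'k::field) (n - s)) s)"
  by (simp add: Delta2_monom_one binomial_ring monom_monom_eq_vars of_nat_poly mult_ac)

locale nonassoc_alg =
  fixes sc :: "'k::field \<Rightarrow> 'a::ab_group_add \<Rightarrow> 'a" and mul :: "'a \<Rightarrow> 'a \<Rightarrow> 'a"
  assumes nonassoc: "nonassoc_algebra sc mul"
begin

sublocale vector_space sc
  using nonassoc by unfold_locales (simp_all add: nonassoc_algebra_def)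

sublocale mul_left: additive "\<lambda>u. mul u v" for v
  using nonassoc by unfold_locales (simp add: nonassoc_algebra_def)

sublocale mul_right: additive "mul u" for u
  using nonassoc by unfold_locales (simp add: nonassoc_algebra_def)

lemma mul_scale_left: "mul (sc c u) v = sc c (mul u v)"
  and mul_scale_right: "mul u (sc c v) = sc c (mul u v)"
  using nonassoc by (simp_all add: nonassoc_algebra_def)

sublocale At: vector_space "scaleAt sc"
proof -
  have "scaleAt sc = (\<lambda>c. map_poly (sc c))"
    by (simp add: fun_eq_iff scaleAt_def)
  then show "vector_space (scaleAt sc)"
    using vector_space_map_poly by simp
qed

sublocale P: vector_space "scaleP sc"
proof -
  have "scaleP sc = (\<lambda>c. map_poly (scaleAt sc c))"
    by (simp add: fun_eq_iff scaleP_def)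
  then show "vector_space (scaleP sc)"
    using At.vector_space_map_poly by simp
qed

sublocale mulAt_left: additive "\<lambda>p. mulAt mul p q" for q
  by (rule additive_mulAt_left) (simp_all add: mul_left.additive_axioms mul_right.additive_axioms)

sublocale mulAt_right: additive "mulAt mul p" for p
  by (rule additive_mulAt_right) (simp_all add: mul_left.additive_axioms mul_right.additive_axioms)

lemma mulAt_mul_monom: "mulAt mul (monom a i) (monom b j) = monom (mul a b) (i + j)"
  by (rule mulAt_monom) (simp_all add: mul_left.additive_axioms mul_right.additive_axioms)

lemma mulAt_tensor2: "mulAt (mulAt mul) (tensor2 sc K a) (tensor2 sc L b) = tensor2 sc (K * L) (mul a b)"
proof -
  note mulAt_mul = mulAt_map_poly[OF mul_left.additive_axioms mul_right.additive_axioms]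
  have coeffwise: "mulAt mul (map_poly (\<lambda>c. sc c a) x) (map_poly (\<lambda>c. sc c b) y)
      = map_poly (\<lambda>c. sc c (mul a b)) (x * y)" for x y
    by (rule mulAt_mul) (simp_all add: scale_left.additive_axioms mul_scale_left mul_scale_right)
  show ?thesis
    unfolding tensor2_def
    by (rule mulAt_map_poly[where \<beta> = "mulAt mul"])
      (rule mulAt_left.additive_axioms mulAt_right.additive_axioms coeffwise additive_map_poly
        scale_left.additive_axioms)+
qed

lemma coactAt_eq_sum_coeffs: "coactAt sc p = sum_coeffs (\<lambda>n a. tensor2 sc (Delta2 (monom 1 n)) a) p"
  by (simp add: coactAt_def sum_coeffs_def Delta2_monom_one_expand tensor2_left.sum tensor2_monom)

lemma additive_coactAt: "additive (coactAt sc)"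
  unfolding coactAt_eq_sum_coeffs by (intro additive_sum_coeffs tensor2_right.additive_axioms)

lemma coactAt_monom: "coactAt sc (monom a n) = tensor2 sc (Delta2 (monom 1 n)) a"
  unfolding coactAt_eq_sum_coeffs by (rule sum_coeffs_monom) (rule tensor2_right.zero)

lemma coactAt_monom_expand:
  "coactAt sc (monom a n) = (\<Sum>s\<le>n. monom (monom (sc (of_nat (n choose s)) a) (n - s)) s)"
  by (simp add: coactAt_monom Delta2_monom_one_expand tensor2_left.sum tensor2_monom)

lemma coactAt_scaleAt: "coactAt sc (scaleAt sc c u) = map_poly (scaleAt sc c) (coactAt sc u)"
proof (rule additive_eq_on_monoms[where f = "\<lambda>u. coactAt sc (scaleAt sc c u)"])
  show "additive (\<lambda>u. coactAt sc (scaleAt sc c u))"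
    by (rule additive_comp[OF additive_coactAt At.scale_right.additive_axioms])
  show "additive (\<lambda>u. map_poly (scaleAt sc c) (coactAt sc u))"
    by (rule additive_comp[OF additive_map_poly[OF At.scale_right.additive_axioms] additive_coactAt])
  show "coactAt sc (scaleAt sc c (monom a n)) = map_poly (scaleAt sc c) (coactAt sc (monom a n))" for a n
    by (simp add: scaleAt_def[abs_def] map_poly_monom coactAt_monom map_poly_scale_tensor2)
qed

lemma coactAt_mulAt: "coactAt sc (mulAt mul u v) = mulHB (mulAt mul) (coactAt sc u) (coactAt sc v)"
proof -
  have mulAt2_additive: "additive (\<lambda>p. mulAt (mulAt mul) p q)" "additive (mulAt (mulAt mul) p)" for p q
    by (rule additive_mulAt_left additive_mulAt_right;
        simp add: mulAt_left.additive_axioms mulAt_right.additive_axioms)+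
  have monoms: "coactAt sc (mulAt mul (monom a n) (monom b m))
      = mulAt (mulAt mul) (coactAt sc (monom a n)) (coactAt sc (monom b m))" for a n b m
    by (simp add: mulAt_mul_monom coactAt_monom mulAt_tensor2 Delta2_monom_one power_add)
  show ?thesis
    unfolding mulHB_eq_mulAt
  proof (rule additive_eq_on_monoms[OF additive_comp[OF additive_coactAt mulAt_left.additive_axioms]
        additive_comp[OF mulAt2_additive(1) additive_coactAt]])
    fix a n
    show "coactAt sc (mulAt mul (monom a n) v) = mulAt (mulAt mul) (coactAt sc (monom a n)) (coactAt sc v)"
      by (rule additive_eq_on_monoms[OF additive_comp[OF additive_coactAt mulAt_right.additive_axioms]
          additive_comp[OF mulAt2_additive(2) additive_coactAt] monoms])
  qed
qed

lemma coeff_coactAt_0: "coeff (coactAt sc u) 0 = u"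
proof (rule additive_eq_on_monoms[where f = "\<lambda>u. coeff (coactAt sc u) 0" and g = "\<lambda>u. u"])
  show "additive (\<lambda>u. coeff (coactAt sc u) 0)"
    by (rule additive_comp[OF additive_coeff additive_coactAt])
  show "additive (\<lambda>u::'a poly. u)"
    by unfold_locales simp
  show "coeff (coactAt sc (monom a n)) 0 = monom a n" for a n
    by (simp add: coactAt_monom Delta2_monom_one_expand tensor2_left.sum tensor2_monom coeff_sum)
qed

lemma map_poly_coactAt_coactAt_monom:
  "map_poly (coactAt sc) (coactAt sc (monom a n))
     = tensor3 sc ((monom 1 1 + ([:monom 1 1:] + [:[:monom 1 1:]:])) ^ n) a"
proof -
  have "map_poly (coactAt sc) (coactAt sc (monom a n))
      = (\<Sum>s\<le>n. monom (coactAt sc (monom (sc (of_nat (n choose s)) a) (n - s))) s)"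
    by (simp add: coactAt_monom_expand additive.sum[OF additive_map_poly[OF additive_coactAt]]
        map_poly_monom additive.zero[OF additive_coactAt])
  also have "\<dots> = (\<Sum>s\<le>n. tensor3 sc (of_nat (n choose s) * monom 1 1 ^ s
                                    * ([:monom 1 1:] + [:[:monom 1 1:]:]) ^ (n - s)) a)"
  proof (rule sum.cong[OF refl])
    fix s
    have "monom ((monom 1 1 + [:monom 1 1:]) ^ (n - s)) s
        = ([:monom 1 1:] + [:[:monom (1::'k) 1:]:]) ^ (n - s) * monom 1 1 ^ s"
      by (simp add: monom_power poly_const_pow smult_monom)
    then show "monom (coactAt sc (monom (sc (of_nat (n choose s)) a) (n - s))) s
        = tensor3 sc (of_nat (n choose s) * monom 1 1 ^ s * ([:monom 1 1:] + [:[:monom 1 1:]:]) ^ (n - s)) a"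
      by (simp add: coactAt_monom Delta2_monom_one tensor3_monom[symmetric] tensor3_of_nat mult_ac)
  qed
  also have "\<dots> = tensor3 sc ((monom 1 1 + ([:monom 1 1:] + [:[:monom 1 1:]:])) ^ n) a"
    by (simp add: binomial_ring tensor3_left.sum)
  finally show ?thesis .
qed

lemma DeltaId_eq_sum_coeffs:
  "DeltaId (scaleAt sc) X = sum_coeffs (\<lambda>s x. map_poly (map_poly (\<lambda>c. scaleAt sc c x)) (Delta2 (monom 1 s))) X"
  by (simp add: DeltaId_def sum_coeffs_def)

lemma additive_DeltaId: "additive (DeltaId (scaleAt sc))"
proof -
  have "additive (\<lambda>x. map_poly (map_poly (\<lambda>c. scaleAt sc c x)) Q)" for Q :: "'k poly poly"
    by unfold_locales (simp add: poly_eq_iff coeff_map_poly At.scale_right_distrib)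
  then show ?thesis
    unfolding DeltaId_eq_sum_coeffs by (intro additive_sum_coeffs)
qed

lemma DeltaId_coactAt_monom:
  "DeltaId (scaleAt sc) (coactAt sc (monom a n))
     = tensor3 sc (((monom 1 1 + [:monom 1 1:]) + [:[:monom 1 1:]:]) ^ n) a"
proof -
  have DeltaId_monom: "DeltaId (scaleAt sc) (monom (monom y e) s)
      = tensor3 sc ((monom 1 1 + [:monom 1 1:]) ^ s * [:[:monom 1 1:]:] ^ e) y" for y e s
  proof -
    have "additive (map_poly (map_poly (\<lambda>c. scaleAt sc c (monom y e))))"
      by (intro additive_map_poly At.scale_left.additive_axioms)
    then have "DeltaId (scaleAt sc) (monom (monom y e) s)
        = (\<Sum>r\<le>s. tensor3 sc (monom (monom (monom (of_nat (s choose r)) e) (s - r)) r) y)"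
      by (simp add: DeltaId_eq_sum_coeffs sum_coeffs_monom poly_eq_iff[of _ 0] coeff_map_poly
          Delta2_monom_one_expand additive.sum map_poly_monom scaleAt_def tensor3_monom tensor2_monom)
    also have "\<dots> = tensor3 sc ((monom 1 1 + [:monom 1 1:]) ^ s * [:[:monom 1 1:]:] ^ e) y"
      by (simp add: tensor3_left.sum[symmetric] binomial_ring sum_distrib_right monom3_eq_vars of_nat_poly)
    finally show ?thesis .
  qed
  have "DeltaId (scaleAt sc) (coactAt sc (monom a n))
      = (\<Sum>s\<le>n. DeltaId (scaleAt sc) (monom (monom (sc (of_nat (n choose s)) a) (n - s)) s))"
    by (simp add: coactAt_monom_expand additive.sum[OF additive_DeltaId])
  also have "\<dots> = tensor3 sc (\<Sum>s\<le>n. of_nat (n choose s) * (monom 1 1 + [:monom 1 1:]) ^ s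
                                     * [:[:monom 1 1:]:] ^ (n - s)) a"
    by (simp add: DeltaId_monom tensor3_of_nat tensor3_left.sum mult_ac)
  also have "\<dots> = tensor3 sc (((monom 1 1 + [:monom 1 1:]) + [:[:monom 1 1:]:]) ^ n) a"
    by (simp only: binomial_ring)
  finally show ?thesis .
qed

lemma coactAt_coassoc: "map_poly (coactAt sc) (coactAt sc u) = DeltaId (scaleAt sc) (coactAt sc u)"
  by (rule additive_eq_on_monoms[OF additive_comp[OF additive_map_poly[OF additive_coactAt] additive_coactAt]
        additive_comp[OF additive_DeltaId additive_coactAt]])
    (simp add: map_poly_coactAt_coactAt_monom DeltaId_coactAt_monom add.assoc)

lemma H_comodule_algebra_At: "H_comodule_algebra (scaleAt sc) (mulAt mul) (coactAt sc)"
  unfolding H_comodule_algebra_def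
  by (simp add: additive.add[OF additive_coactAt] coactAt_scaleAt coactAt_mulAt coactAt_coassoc
      coeff_coactAt_0)

end

section \<open>The pseudoalgebra P(A[t])\<close>

lemma tensHH_add_left: "tensHH (h + h') g = tensHH h g + tensHH h' g"
  by (simp add: poly_eq_iff tensHH_def coeff_map_poly smult_add_left)

lemma tensHH_add_right: "tensHH h (g + g') = tensHH h g + tensHH h g'"
  by (simp add: poly_eq_iff tensHH_def coeff_map_poly smult_add_right)

lemma tensHH_monom: "tensHH (monom c i) (monom d j) = monom (monom (c * d) j) i"
  by (simp add: tensHH_def map_poly_monom smult_monom)

lemma eqH2_refl: "eqH2 scP actH X X"
  by (simp add: eqH2_def kspan_zero)

context nonassoc_alg
begin

lemma actP_eq_sum_coeffs2: "actP sc h m = sum_coeffs2 (\<lambda>j i c v. monom (scaleAt sc c v) (i + j)) h m"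
  by (simp add: actP_def sum_coeffs2_def sum_coeffs_def)

lemma biadditive_actP_terms: "biadditive (\<lambda>j i c v. monom (scaleAt sc c v) (i + j))"
  by (rule biadditiveI) (simp_all add: At.scale_left_distrib At.scale_right_distrib add_monom)

sublocale actP_left: additive "\<lambda>h. actP sc h m" for m
  unfolding actP_eq_sum_coeffs2 by (rule additive_sum_coeffs2_left[OF biadditive_actP_terms])

sublocale actP_right: additive "actP sc h" for h
  unfolding actP_eq_sum_coeffs2 by (rule additive_sum_coeffs2_right[OF biadditive_actP_terms])

lemma actP_monom: "actP sc (monom c j) (monom p i) = monom (scaleAt sc c p) (i + j)"
  unfolding actP_eq_sum_coeffs2 by (rule sum_coeffs2_monom[OF biadditive_actP_terms])

lemma actP_mult: "actP sc (h * g) u = actP sc h (actP sc g u)"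
proof (induct h arbitrary: g u rule: poly_induct_monom)
  case (monom c j)
  show ?case
  proof (induct g arbitrary: u rule: poly_induct_monom)
    case (monom d k)
    show ?case
      by (induct u rule: poly_induct_monom)
        (simp_all add: mult_monom actP_monom At.scale_scale add_ac actP_right.add)
  next
    case (add g g')
    then show ?case by (simp add: distrib_left actP_left.add actP_right.add)
  qed
next
  case (add h h')
  then show ?case by (simp add: distrib_right actP_left.add)
qed

lemma actP_const: "actP sc [:c:] u = scaleP sc c u"
proof (induct u rule: poly_induct_monom)
  case (monom p i)
  show ?case by (simp add: monom_0[symmetric] actP_monom scaleP_def map_poly_monom)
next
  case (add p q)
  then show ?case by (simp add: actP_right.add P.scale_right_distrib)
qed

definition pprodP_terms :: "nat \<Rightarrow> nat \<Rightarrow> 'a poly \<Rightarrow> 'a poly \<Rightarrow> 'a poly poly poly poly" where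
  "pprodP_terms i j u v = sum_coeffs2 (\<lambda>s r a b. monom (monom (monom (mulAt mul a b) 0) (j + s)) (i + r))
                            (coactAt sc u) (coactAt sc v)"

lemma pprodP_eq_sum_coeffs2: "pprodP sc mul x y = sum_coeffs2 pprodP_terms x y"
  by (simp add: pprodP_def pprodP_terms_def sum_coeffs2_def sum_coeffs_def)

lemma biadditive_pprodP_terms_inner:
  "biadditive (\<lambda>s r a b. monom (monom (monom (mulAt mul a b) 0) (j + s)) (i + r))"
  by (rule biadditiveI) (simp_all add: mulAt_left.add mulAt_right.add add_monom)

lemma biadditive_pprodP_terms: "biadditive pprodP_terms"
  unfolding pprodP_terms_def
  by (rule biadditiveI)
    (simp_all add: additive.add[OF additive_coactAt] biadditive_pprodP_terms_inner
      additive.add[OF additive_sum_coeffs2_left] additive.add[OF additive_sum_coeffs2_right])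

sublocale pprodP_left: additive "\<lambda>x. pprodP sc mul x y" for y
  unfolding pprodP_eq_sum_coeffs2 by (rule additive_sum_coeffs2_left[OF biadditive_pprodP_terms])

sublocale pprodP_right: additive "pprodP sc mul x" for x
  unfolding pprodP_eq_sum_coeffs2 by (rule additive_sum_coeffs2_right[OF biadditive_pprodP_terms])

lemma pprodP_monom:
  "pprodP sc mul (monom (monom a n) i) (monom (monom b m) j) =
    (\<Sum>s\<le>n. \<Sum>r\<le>m. monom (monom (monom (monom (sc (of_nat ((n choose s) * (m choose r))) (mul a b))
        (n - s + (m - r))) 0) (j + s)) (i + r))"
proof -
  have "pprodP sc mul (monom (monom a n) i) (monom (monom b m) j) = pprodP_terms i j (monom a n) (monom b m)"
    unfolding pprodP_eq_sum_coeffs2 by (rule sum_coeffs2_monom[OF biadditive_pprodP_terms])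
  also have "\<dots> = (\<Sum>s\<le>n. \<Sum>r\<le>m. monom (monom (monom (mulAt mul
                      (monom (sc (of_nat (n choose s)) a) (n - s)) (monom (sc (of_nat (m choose r)) b) (m - r)))
                      0) (j + s)) (i + r))"
    by (simp add: pprodP_terms_def coactAt_monom_expand biadditive_pprodP_terms_inner
        additive.sum[OF additive_sum_coeffs2_left] additive.sum[OF additive_sum_coeffs2_right]
        sum_coeffs2_monom)
      (rule sum.swap)
  also have "\<dots> = (\<Sum>s\<le>n. \<Sum>r\<le>m. monom (monom (monom (monom (sc (of_nat ((n choose s) * (m choose r)))
                      (mul a b)) (n - s + (m - r))) 0) (j + s)) (i + r))"
    by (simp add: mulAt_mul_monom mul_scale_left mul_scale_right mult.commute)
  finally show ?thesis .
qed

sublocale act2_right: additive "act2 (scaleP sc) F" for F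
  unfolding act2_def by (intro additive_sum2 P.tensor2_right.additive_axioms)

lemma act2_add_left: "act2 (scaleP sc) (F + F') X = act2 (scaleP sc) F X + act2 (scaleP sc) F' X"
  by (simp add: act2_def distrib_right P.tensor2_left.add sum2_fun_add)

lemma act2_monom: "act2 (scaleP sc) F (monom (monom m j) i) = tensor2 (scaleP sc) (F * mon2 i j) m"
  unfolding act2_def by (rule sum2_monom[OF P.tensor2_right.additive_axioms])

lemma pprodP_actP_monom:
  "pprodP sc mul (actP sc (monom c i0) (monom (monom a n) i)) (actP sc (monom d j0) (monom (monom b m) j))
   = act2 (scaleP sc) (tensHH (monom c i0) (monom d j0)) (pprodP sc mul (monom (monom a n) i) (monom (monom b m) j))"
proof -
  have "pprodP sc mul (actP sc (monom c i0) (monom (monom a n) i)) (actP sc (monom d j0) (monom (monom b m) j))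
     = pprodP sc mul (monom (monom (sc c a) n) (i + i0)) (monom (monom (sc d b) m) (j + j0))"
    by (simp add: actP_monom scaleAt_def map_poly_monom)
  also have "\<dots> = act2 (scaleP sc) (tensHH (monom c i0) (monom d j0))
                     (pprodP sc mul (monom (monom a n) i) (monom (monom b m) j))"
    unfolding pprodP_monom act2_right.sum
    by (intro sum.cong refl)
      (simp add: act2_monom tensHH_monom mon2_def mult_monom P.tensor2_monom scaleP_def scaleAt_def
        map_poly_monom mul_scale_left mul_scale_right scale_left_commute add_ac del: of_nat_mult)
  finally show ?thesis .
qed

lemma pprodP_actP:
  "pprodP sc mul (actP sc h u) (actP sc g v) = act2 (scaleP sc) (tensHH h g) (pprodP sc mul u v)"
proof (induct h arbitrary: g u v rule: poly_induct_monom)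
  case (monom c i0)
  show ?case
  proof (induct g arbitrary: u v rule: poly_induct_monom)
    case (monom d j0)
    show ?case
    proof (induct u arbitrary: v rule: poly2_induct_monom)
      case (monom a n i)
      show ?case
        by (induct v rule: poly2_induct_monom)
          (simp_all add: pprodP_actP_monom actP_right.add pprodP_right.add act2_right.add)
    next
      case (add u u')
      then show ?case by (simp add: actP_right.add pprodP_left.add act2_right.add)
    qed
  next
    case (add g g')
    then show ?case by (simp add: actP_left.add pprodP_right.add tensHH_add_right act2_add_left)
  qed
next
  case (add h h')
  then show ?case by (simp add: actP_left.add pprodP_left.add tensHH_add_left act2_add_left)
qed

lemma H_pseudoalgebra_P: "H_pseudoalgebra (scaleP sc) (actP sc) (pprodP sc mul)"
  unfolding H_pseudoalgebra_def
  by (simp add: actP_left.add actP_right.add actP_mult actP_const pprodP_left.add pprodP_right.add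
      pprodP_actP eqH2_refl)

end

section \<open>Expanded pseudoproducts as generating polynomials\<close>

lemma binomial_product:
  fixes A x y u :: "'r::comm_semiring_1"
  shows "A * (y + u) ^ n * (x + u) ^ m
    = (\<Sum>s\<le>n. \<Sum>r\<le>m. of_nat ((n choose s) * (m choose r)) * (A * x ^ r * y ^ s * u ^ (n - s + (m - r))))"
proof -
  have "A * (y + u) ^ n * (x + u) ^ m
      = A * ((\<Sum>s\<le>n. of_nat (n choose s) * y ^ s * u ^ (n - s)) * (\<Sum>r\<le>m. of_nat (m choose r) * x ^ r * u ^ (m - r)))"
    by (simp add: binomial_ring mult.assoc)
  also have "\<dots> = (\<Sum>s\<le>n. \<Sum>r\<le>m.
      A * ((of_nat (n choose s) * y ^ s * u ^ (n - s)) * (of_nat (m choose r) * x ^ r * u ^ (m - r))))"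
    unfolding sum_product by (simp only: sum_distrib_left)
  also have "\<dots> = (\<Sum>s\<le>n. \<Sum>r\<le>m.
      of_nat ((n choose s) * (m choose r)) * (A * x ^ r * y ^ s * u ^ (n - s + (m - r))))"
    by (intro sum.cong refl) (simp only: power_add of_nat_mult mult_ac)
  finally show ?thesis .
qed

(*
  H\<otimes>H\<otimes>H \<otimes> P = H\<otimes>H\<otimes>H \<otimes> H \<otimes> A[t] is encoded by five nested polynomial levels; D1, D2, D3
  and tvar are the variables of the three outer factors H and of t.  The variable of the factor H
  of P never occurs: expanded pseudoproducts of P(A[t]) lie in H\<otimes>H\<otimes>H \<otimes> (1 \<otimes> A[t]).
*)
definition D1 :: "'r::comm_ring_1 poly poly poly poly poly" where "D1 = monom 1 1"
definition D2 :: "'r::comm_ring_1 poly poly poly poly poly" where "D2 = [:monom 1 1:]"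
definition D3 :: "'r::comm_ring_1 poly poly poly poly poly" where "D3 = [:[:monom 1 1:]:]"
definition tvar :: "'r::comm_ring_1 poly poly poly poly poly" where "tvar = [:[:[:[:monom 1 1:]:]:]:]"

definition triple_gen ::
  "nat \<Rightarrow> nat \<Rightarrow> nat \<Rightarrow> nat \<Rightarrow> nat \<Rightarrow> nat \<Rightarrow> 'r::comm_ring_1 poly poly poly poly poly" where
  "triple_gen i j k n m l = D1 ^ i * D2 ^ j * D3 ^ k * (D2 + D3 + tvar) ^ n * (D1 + D3 + tvar) ^ m * (D1 + D2 + tvar) ^ l"

definition embed3 :: "'r::comm_ring_1 poly poly poly \<Rightarrow> 'r poly poly poly poly poly" where
  "embed3 F = map_poly (map_poly (map_poly (\<lambda>c. [:[:c:]:]))) F"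

definition embed2 :: "'r::comm_ring_1 poly poly \<Rightarrow> 'r poly poly poly" where
  "embed2 F = map_poly (map_poly (\<lambda>c. [:c:])) F"

lemma comm_ring_hom_embed3: "comm_ring_hom (embed3 :: 'r::comm_ring_1 poly poly poly \<Rightarrow> _)"
  unfolding embed3_def[abs_def]
  by (intro comm_ring_hom_map_poly comm_ring_hom_comp[OF comm_ring_hom_const_poly comm_ring_hom_const_poly])

lemma comm_ring_hom_embed2: "comm_ring_hom (embed2 :: 'r::comm_ring_1 poly poly \<Rightarrow> _)"
  unfolding embed2_def[abs_def] by (intro comm_ring_hom_map_poly comm_ring_hom_const_poly)

lemma embed3_vars:
  "embed3 (monom 1 1) = D1" "embed3 [:monom 1 1:] = D2" "embed3 [:[:monom 1 1:]:] = D3"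
  by (simp_all add: embed3_def D1_def D2_def D3_def map_poly_monom map_poly_pCons one_pCons[symmetric])

lemma embed3_D1_D3: "embed3 [:0, 1:] = D1" "embed3 [:[:[:0, 1:]:]:] = D3"
  by (simp_all add: embed3_def D1_def D3_def monom_Suc monom_0 map_poly_pCons one_pCons)

lemma embed2_vars: "embed2 (monom 1 1) = monom 1 1" "embed2 [:monom 1 1:] = [:monom 1 1:]"
  by (simp_all add: embed2_def map_poly_monom map_poly_pCons)

lemma mon2_eq_vars: "mon2 a b = monom 1 1 ^ a * [:monom 1 1:] ^ b"
  using monom_monom_eq_vars[of 1 b a] by (simp add: mon2_def one_pCons[symmetric] mult.commute)

lemma tvar_power: "tvar ^ e = [:[:[:[:monom 1 e:]:]:]:]"
  by (simp add: tvar_def poly_const_pow monom_power)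

lemma embed3_tensHH_H:
  "embed3 (tensHH_H (mon2 i j * Delta2 (monom 1 r)) (monom (1::'k::field) e))
     = D1 ^ i * D2 ^ j * (D1 + D2) ^ r * D3 ^ e"
proof -
  interpret e2: comm_ring_hom embed2 by (rule comm_ring_hom_embed2)
  interpret e3: comm_ring_hom embed3 by (rule comm_ring_hom_embed3)
  have "tensHH_H G (monom 1 e) = embed2 G * [:[:monom 1 1:]:] ^ e" for G :: "'k poly poly"
    by (simp add: poly_eq_iff tensHH_H_def embed2_def coeff_map_poly poly_const_pow monom_power)
  then show ?thesis
    by (simp only: mon2_eq_vars Delta2_monom_one e2.hom_mult e2.hom_power e2.add embed2_vars
        e3.hom_mult e3.hom_power e3.add embed3_vars)
qed

lemma embed3_tensH_HH:
  "embed3 (tensH_HH (monom 1 c) (mon2 a b * Delta2 (monom (1::'k::field) d)))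
     = D1 ^ c * D2 ^ a * D3 ^ b * (D2 + D3) ^ d"
proof -
  interpret const: comm_ring_hom "\<lambda>c. [:c:]" by (rule comm_ring_hom_const_poly)
  interpret e3: comm_ring_hom embed3 by (rule comm_ring_hom_embed3)
  have "tensH_HH (monom 1 c) G = [:G:] * monom 1 1 ^ c" for G :: "'k poly poly"
    by (simp add: poly_eq_iff tensH_HH_def coeff_map_poly monom_power)
  then show ?thesis
    by (simp only: mon2_eq_vars Delta2_monom_one const.hom_mult const.hom_power const.add
        e3.hom_mult e3.hom_power e3.add embed3_vars mult_ac)
qed

interpretation swap12: additive "swap12 :: 'v::ab_group_add poly poly \<Rightarrow> _"
  unfolding swap12_def by (rule additive_sum2) (unfold_locales, simp add: add_monom)

lemma swap12_monom: "swap12 (monom (monom (z::'v::ab_group_add) j) i) = monom (monom z i) j"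
  unfolding swap12_def by (rule sum2_monom) (unfold_locales, simp add: add_monom)

lemma comm_ring_hom_swap12: "comm_ring_hom (swap12 :: 'r::comm_ring_1 poly poly \<Rightarrow> _)"
proof (intro comm_ring_hom.intro comm_ring_hom_axioms.intro)
  show "additive (swap12 :: 'r poly poly \<Rightarrow> _)"
    by (rule swap12.additive_axioms)
  show "swap12 (X * Y) = swap12 X * swap12 Y" for X Y :: "'r poly poly"
  proof (induct X rule: poly2_induct_monom)
    case (monom a j i)
    show ?case
      by (induct Y rule: poly2_induct_monom)
        (simp_all add: mult_monom swap12_monom distrib_left swap12.add)
  next
    case (add X X')
    then show ?case by (simp add: distrib_right swap12.add)
  qed
  show "swap12 (1 :: 'r poly poly) = 1"
    using swap12_monom[of "1::'r" 0 0] by (simp add: monom_0 one_pCons)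
qed

lemma swap12_map_poly2:
  assumes "additive h"
  shows "swap12 (map_poly (map_poly h) X) = map_poly (map_poly h) (swap12 X)"
  by (rule additive_eq_on_monoms2[OF additive_comp[OF swap12.additive_axioms additive_map_poly[OF additive_map_poly[OF assms]]]
        additive_comp[OF additive_map_poly[OF additive_map_poly[OF assms]] swap12.additive_axioms]])
    (simp add: map_poly_monom swap12_monom additive.zero[OF assms])

lemma swap12_vars:
  "swap12 (monom 1 1 :: 'r::comm_ring_1 poly poly) = [:monom 1 1:]"
  "swap12 ([:monom 1 1:] :: 'r::comm_ring_1 poly poly) = monom 1 1"
  "swap12 ([:[:q:]:] :: 'r::comm_ring_1 poly poly) = [:[:q:]:]"
  using swap12_monom[of "1::'r" 0 1] swap12_monom[of "1::'r" 1 0] swap12_monom[of q 0 0]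
  by (simp_all add: monom_0 one_pCons)

lemma swap12_triple_gen:
  "swap12 (triple_gen j i k m n l :: 'r::comm_ring_1 poly poly poly poly poly) = triple_gen i j k n m l"
proof -
  interpret swap: comm_ring_hom "swap12 :: 'r::comm_ring_1 poly poly poly poly poly \<Rightarrow> _"
    by (rule comm_ring_hom_swap12)
  have "swap12 (D1 :: 'r poly poly poly poly poly) = D2" "swap12 (D2 :: 'r poly poly poly poly poly) = D1"
    "swap12 (D3 :: 'r poly poly poly poly poly) = D3" "swap12 (tvar :: 'r poly poly poly poly poly) = tvar"
    by (simp_all only: D1_def D2_def D3_def tvar_def swap12_vars)
  then show ?thesis
    by (simp add: triple_gen_def swap.hom_mult swap.hom_power swap12.add add_ac mult_ac)
qed

lemma map_swap12_triple_gen: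
  "map_poly swap12 (triple_gen i k j n l m :: 'r::comm_ring_1 poly poly poly poly poly) = triple_gen i j k n m l"
proof -
  interpret swap: comm_ring_hom "map_poly swap12 :: 'r::comm_ring_1 poly poly poly poly poly \<Rightarrow> _"
    by (rule comm_ring_hom_map_poly[OF comm_ring_hom_swap12])
  have "map_poly swap12 (D1 :: 'r poly poly poly poly poly) = D1"
    "map_poly swap12 (D2 :: 'r poly poly poly poly poly) = D3"
    "map_poly swap12 (D3 :: 'r poly poly poly poly poly) = D2"
    "map_poly swap12 (tvar :: 'r poly poly poly poly poly) = tvar"
    by (simp_all only: D1_def D2_def D3_def tvar_def map_poly_monom map_poly_pCons swap12_vars
        comm_ring_hom.hom_one[OF comm_ring_hom_swap12] swap12.zero map_poly_0)
  then show ?thesis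
    by (simp add: triple_gen_def swap.hom_mult swap.hom_power swap.add add_ac mult_ac)
qed

interpretation sigma12: additive "sigma12 :: 'v::ab_group_add poly poly poly \<Rightarrow> _"
  unfolding sigma12_def[abs_def] by (rule swap12.additive_axioms)

interpretation sigma23: additive "sigma23 :: 'v::ab_group_add poly poly poly \<Rightarrow> _"
  unfolding sigma23_def[abs_def] by (rule additive_map_poly[OF swap12.additive_axioms])

context vector_space
begin

lemma sigma12_tensor5: "sigma12 (tensor5 scale K z) = tensor5 scale (swap12 K) z"
  unfolding sigma12_def tensor5_def
  by (rule swap12_map_poly2) (intro additive_map_poly scale_left.additive_axioms)

lemma sigma23_tensor5: "sigma23 (tensor5 scale K z) = tensor5 scale (map_poly swap12 K) z"
proof -
  let ?h = "map_poly (map_poly (\<lambda>c. scale c z))"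
  have "additive ?h"
    by (intro additive_map_poly scale_left.additive_axioms)
  then have "(\<lambda>Q. swap12 (map_poly (map_poly ?h) Q)) = (\<lambda>Q. map_poly (map_poly ?h) (swap12 Q))"
    by (simp add: fun_eq_iff swap12_map_poly2)
  then show ?thesis
    by (simp add: sigma23_def tensor5_def map_poly_map_poly swap12.zero o_def)
qed

end

context nonassoc_alg
begin

lemma tensor3_scaleP_eq_tensor5:
  "tensor3 (scaleP sc) F (monom (monom z e) 0) = tensor5 sc (embed3 F * tvar ^ e) z"
  by (simp add: poly_eq_iff coeff_tensor5 P.coeff_tensor3 tvar_power embed3_def coeff_map_poly
      scaleP_def scaleAt_def map_poly_monom coeff_pCons split: nat.split)

sublocale lprod_left: additive "\<lambda>X. lprod (scaleP sc) (pprodP sc mul) X w" for w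
  unfolding lprod_def
  by (intro additive_sum2 additive_comp[OF additive_sum2 pprodP_left.additive_axioms]
      P.tensor3_right.additive_axioms)

sublocale lprod_right: additive "lprod (scaleP sc) (pprodP sc mul) X" for X
  by unfold_locales
    (simp add: lprod_def pprodP_right.add additive.add[OF additive_sum2[OF P.tensor3_right.additive_axioms]]
      sum2_fun_add)

sublocale rprod_left: additive "\<lambda>u. rprod (scaleP sc) (pprodP sc mul) u Y" for Y
  by unfold_locales
    (simp add: rprod_def pprodP_left.add additive.add[OF additive_sum2[OF P.tensor3_right.additive_axioms]]
      sum2_fun_add)

sublocale rprod_right: additive "rprod (scaleP sc) (pprodP sc mul) u" for u
  unfolding rprod_def
  by (intro additive_sum2 additive_comp[OF additive_sum2 pprodP_right.additive_axioms]
      P.tensor3_right.additive_axioms)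

lemma lprod_monom_left:
  "lprod (scaleP sc) (pprodP sc mul) (monom (monom m j) i) w
   = sum2 (pprodP sc mul m w) (\<lambda>a b. tensor3 (scaleP sc) (tensHH_H (mon2 i j * Delta2 (monom 1 a)) (monom 1 b)))"
  unfolding lprod_def
  by (rule sum2_monom[OF additive_comp[OF additive_sum2 pprodP_left.additive_axioms]])
    (rule P.tensor3_right.additive_axioms)

lemma rprod_monom_right:
  "rprod (scaleP sc) (pprodP sc mul) u (monom (monom y b) a)
   = sum2 (pprodP sc mul u y) (\<lambda>c d. tensor3 (scaleP sc) (tensH_HH (monom 1 c) (mon2 a b * Delta2 (monom 1 d))))"
  unfolding rprod_def
  by (rule sum2_monom[OF additive_comp[OF additive_sum2 pprodP_right.additive_axioms]])
    (rule P.tensor3_right.additive_axioms)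

lemma lprod_monom:
  "lprod (scaleP sc) (pprodP sc mul) (monom (monom (monom (monom y g) 0) j) i) (monom (monom c l) k)
   = tensor5 sc (D1 ^ i * D2 ^ j * D3 ^ k * (D3 + tvar) ^ g * (D1 + D2 + tvar) ^ l) (mul y c)"
proof -
  let ?C = "\<lambda>s r. of_nat ((g choose s) * (l choose r)) :: 'k poly poly poly poly poly"
  have "lprod (scaleP sc) (pprodP sc mul) (monom (monom (monom (monom y g) 0) j) i) (monom (monom c l) k)
      = (\<Sum>s\<le>g. \<Sum>r\<le>l. tensor3 (scaleP sc) (tensHH_H (mon2 i j * Delta2 (monom 1 r)) (monom 1 (k + s)))
            (monom (monom (sc (of_nat ((g choose s) * (l choose r))) (mul y c)) (g - s + (l - r))) 0))"
    by (simp add: lprod_monom_left pprodP_monom additive.sum[OF additive_sum2] sum2_monom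
        P.tensor3_right.additive_axioms del: of_nat_mult)
  also have "\<dots> = (\<Sum>s\<le>g. \<Sum>r\<le>l. tensor5 sc (?C s r *
      (D1 ^ i * D2 ^ j * D3 ^ k * (D1 + D2) ^ r * D3 ^ s * tvar ^ (g - s + (l - r)))) (mul y c))"
    by (simp add: tensor3_scaleP_eq_tensor5 embed3_tensHH_H tensor5_of_nat power_add mult_ac del: of_nat_mult)
  also have "\<dots> = tensor5 sc (D1 ^ i * D2 ^ j * D3 ^ k * (D3 + tvar) ^ g * (D1 + D2 + tvar) ^ l) (mul y c)"
    by (simp only: tensor5_left.sum[symmetric] binomial_product)
  finally show ?thesis .
qed

lemma rprod_monom:
  "rprod (scaleP sc) (pprodP sc mul) (monom (monom a n) i) (monom (monom (monom (monom y g) 0) k) j)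
   = tensor5 sc (D1 ^ i * D2 ^ j * D3 ^ k * (D2 + D3 + tvar) ^ n * (D1 + tvar) ^ g) (mul a y)"
proof -
  let ?C = "\<lambda>s r. of_nat ((n choose s) * (g choose r)) :: 'k poly poly poly poly poly"
  have "rprod (scaleP sc) (pprodP sc mul) (monom (monom a n) i) (monom (monom (monom (monom y g) 0) k) j)
      = (\<Sum>s\<le>n. \<Sum>r\<le>g. tensor3 (scaleP sc) (tensH_HH (monom 1 (i + r)) (mon2 j k * Delta2 (monom 1 s)))
            (monom (monom (sc (of_nat ((n choose s) * (g choose r))) (mul a y)) (n - s + (g - r))) 0))"
    by (simp add: rprod_monom_right pprodP_monom additive.sum[OF additive_sum2] sum2_monom
        P.tensor3_right.additive_axioms del: of_nat_mult)
  also have "\<dots> = (\<Sum>s\<le>n. \<Sum>r\<le>g. tensor5 sc (?C s r *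
      (D1 ^ i * D2 ^ j * D3 ^ k * D1 ^ r * (D2 + D3) ^ s * tvar ^ (n - s + (g - r)))) (mul a y))"
    by (simp add: tensor3_scaleP_eq_tensor5 embed3_tensH_HH tensor5_of_nat power_add mult_ac del: of_nat_mult)
  also have "\<dots> = tensor5 sc (D1 ^ i * D2 ^ j * D3 ^ k * (D2 + D3 + tvar) ^ n * (D1 + tvar) ^ g) (mul a y)"
    by (simp only: tensor5_left.sum[symmetric] binomial_product)
  finally show ?thesis .
qed

lemma lprod_pprodP_monom:
  "lprod (scaleP sc) (pprodP sc mul) (pprodP sc mul (monom (monom a n) i) (monom (monom b m) j)) (monom (monom c l) k)
   = tensor5 sc (triple_gen i j k n m l) (mul (mul a b) c)"
proof -
  let ?A = "D1 ^ i * D2 ^ j * D3 ^ k * (D1 + D2 + tvar) ^ l :: 'k poly poly poly poly poly"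
  have "lprod (scaleP sc) (pprodP sc mul) (pprodP sc mul (monom (monom a n) i) (monom (monom b m) j)) (monom (monom c l) k)
      = (\<Sum>s\<le>n. \<Sum>r\<le>m. tensor5 sc (of_nat ((n choose s) * (m choose r)) *
                     (?A * D1 ^ r * D2 ^ s * (D3 + tvar) ^ (n - s + (m - r)))) (mul (mul a b) c))"
    by (simp add: pprodP_monom lprod_left.sum lprod_monom mul_scale_left tensor5_of_nat power_add mult_ac
        del: of_nat_mult)
  also have "\<dots> = tensor5 sc (?A * (D2 + (D3 + tvar)) ^ n * (D1 + (D3 + tvar)) ^ m) (mul (mul a b) c)"
    by (simp only: tensor5_left.sum[symmetric] binomial_product)
  also have "?A * (D2 + (D3 + tvar)) ^ n * (D1 + (D3 + tvar)) ^ m = triple_gen i j k n m l"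
    by (simp add: triple_gen_def add_ac mult_ac)
  finally show ?thesis .
qed

lemma rprod_pprodP_monom:
  "rprod (scaleP sc) (pprodP sc mul) (monom (monom a n) i) (pprodP sc mul (monom (monom b m) j) (monom (monom c l) k))
   = tensor5 sc (triple_gen i j k n m l) (mul a (mul b c))"
proof -
  let ?A = "D1 ^ i * D2 ^ j * D3 ^ k * (D2 + D3 + tvar) ^ n :: 'k poly poly poly poly poly"
  have "rprod (scaleP sc) (pprodP sc mul) (monom (monom a n) i) (pprodP sc mul (monom (monom b m) j) (monom (monom c l) k))
      = (\<Sum>s\<le>m. \<Sum>r\<le>l. tensor5 sc (of_nat ((m choose s) * (l choose r)) *
                     (?A * D2 ^ r * D3 ^ s * (D1 + tvar) ^ (m - s + (l - r)))) (mul a (mul b c)))"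
    by (simp add: pprodP_monom rprod_right.sum rprod_monom mul_scale_right tensor5_of_nat power_add mult_ac
        del: of_nat_mult)
  also have "\<dots> = tensor5 sc (?A * (D3 + (D1 + tvar)) ^ m * (D2 + (D1 + tvar)) ^ l) (mul a (mul b c))"
    by (simp only: tensor5_left.sum[symmetric] binomial_product)
  also have "?A * (D3 + (D1 + tvar)) ^ m * (D2 + (D1 + tvar)) ^ l = triple_gen i j k n m l"
    by (simp add: triple_gen_def add_ac mult_ac)
  finally show ?thesis .
qed

definition pseudo_associator ::
  "'a poly poly \<Rightarrow> 'a poly poly \<Rightarrow> 'a poly poly \<Rightarrow> 'a poly poly poly poly poly" where
  "pseudo_associator u v w = lprod (scaleP sc) (pprodP sc mul) (pprodP sc mul u v) w
                           - rprod (scaleP sc) (pprodP sc mul) u (pprodP sc mul v w)"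

lemma pseudo_associator_add:
  "pseudo_associator (u + u') v w = pseudo_associator u v w + pseudo_associator u' v w"
  "pseudo_associator u (v + v') w = pseudo_associator u v w + pseudo_associator u v' w"
  "pseudo_associator u v (w + w') = pseudo_associator u v w + pseudo_associator u v w'"
  by (simp_all add: pseudo_associator_def pprodP_left.add pprodP_right.add lprod_left.add lprod_right.add
      rprod_left.add rprod_right.add)

lemma pseudo_associator_monom:
  "pseudo_associator (monom (monom a n) i) (monom (monom b m) j) (monom (monom c l) k)
   = tensor5 sc (triple_gen i j k n m l) (assocA mul a b c)"
  by (simp add: pseudo_associator_def lprod_pprodP_monom rprod_pprodP_monom assocA_def tensor5_right.diff)

lemma assocA_add:
  "assocA mul (x + x') y z = assocA mul x y z + assocA mul x' y z"
  "assocA mul x (y + y') z = assocA mul x y z + assocA mul x y' z"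
  "assocA mul x y (z + z') = assocA mul x y z + assocA mul x y z'"
  by (simp_all add: assocA_def mul_left.add mul_right.add)

end

lemma eqH3_refl: "eqH3 scP actH X X"
  by (simp add: eqH3_def kspan_zero)

locale alt_nonassoc_alg = nonassoc_alg sc mul
  for sc :: "'k::field \<Rightarrow> 'a::ab_group_add \<Rightarrow> 'a" and mul :: "'a \<Rightarrow> 'a \<Rightarrow> 'a" +
  assumes alternative: "alternative_alg mul"
begin

lemma assocA_swap12: "assocA mul y x z = - assocA mul x y z"
proof -
  have square: "assocA mul u u v = 0" for u v
    using alternative by (simp add: alternative_alg_def assocA_def)
  have "assocA mul x y z + assocA mul y x z = assocA mul (x + y) (x + y) z"
    by (simp only: assocA_add) (simp add: square)
  also have "\<dots> = 0"
    by (rule square)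
  finally show ?thesis
    by (simp add: add_eq_0_iff)
qed

lemma assocA_swap23: "assocA mul x z y = - assocA mul x y z"
proof -
  have square: "assocA mul u v v = 0" for u v
    using alternative by (simp add: alternative_alg_def assocA_def)
  have "assocA mul x y z + assocA mul x z y = assocA mul x (y + z) (y + z)"
    by (simp only: assocA_add) (simp add: square)
  also have "\<dots> = 0"
    by (rule square)
  finally show ?thesis
    by (simp add: add_eq_0_iff)
qed

lemma pseudo_associator_swap12: "pseudo_associator u v w = - sigma12 (pseudo_associator v u w)"
proof (induct u v w rule: poly2_induct3)
  case (monom a n i b m j c l k)
  show ?case
    by (simp add: pseudo_associator_monom sigma12.minus sigma12_tensor5 swap12_triple_gen
        assocA_swap12[of b a] tensor5_right.minus)
qed (simp_all add: pseudo_associator_add sigma12.add)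

lemma pseudo_associator_swap23: "pseudo_associator u v w = - sigma23 (pseudo_associator u w v)"
proof (induct u v w rule: poly2_induct3)
  case (monom a n i b m j c l k)
  show ?case
    by (simp add: pseudo_associator_monom sigma23.minus sigma23_tensor5 map_swap12_triple_gen
        assocA_swap23[of a c] tensor5_right.minus)
qed (simp_all add: pseudo_associator_add sigma23.add)

theorem alternative_pseudo_P: "alternative_pseudo (scaleP sc) (actP sc) (pprodP sc mul)"
proof -
  have "- pseudo_associator u v w = sigma12 (pseudo_associator v u w)"
    and "- pseudo_associator u v w = sigma23 (pseudo_associator u w v)" for u v w
    by (subst pseudo_associator_swap12 pseudo_associator_swap23, simp)+
  then show ?thesis
    by (simp add: alternative_pseudo_def pseudo_associator_def eqH3_refl)
qed

end

section \<open>The example\<close>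

definition eval_100 :: "'p::comm_monoid_add poly poly poly \<Rightarrow> 'p" where
  "eval_100 X = sum_coeffs (\<lambda>_ Q. coeff (coeff Q 0) 0) X"

definition eval_1 :: "'p::comm_monoid_add poly \<Rightarrow> 'p" where
  "eval_1 m = sum_coeffs (\<lambda>_ v. v) m"

lemma additive_eval_100: "additive (eval_100 :: 'p::ab_group_add poly poly poly \<Rightarrow> 'p)"
  unfolding eval_100_def[abs_def] by (rule additive_sum_coeffs) (unfold_locales, simp)

lemma additive_eval_1: "additive (eval_1 :: 'p::ab_group_add poly \<Rightarrow> 'p)"
  unfolding eval_1_def[abs_def] by (rule additive_sum_coeffs) (unfold_locales, simp)

lemma eval_1_monom: "eval_1 (monom (v::'p::ab_group_add) k) = v"
  unfolding eval_1_def by (rule sum_coeffs_monom) simp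

lemma eval_100_eq_poly: "eval_100 (F :: 'r::comm_ring_1 poly poly poly) = poly (poly (poly F 1) 0) 0"
proof -
  have "poly F 1 = (\<Sum>i\<le>degree F. coeff F i)"
    by (simp add: poly_altdef)
  then show ?thesis
    by (simp add: eval_100_def sum_coeffs_def poly_sum poly_0_coeff_0 coeff_sum)
qed

lemma eval_100_mult: "eval_100 (F * G) = eval_100 F * eval_100 (G :: 'r::comm_ring_1 poly poly poly)"
  by (simp add: eval_100_eq_poly)

lemma eval_100_Delta3: "eval_100 (Delta3 h) = poly h (1::'k::field)"
proof -
  let ?ev0 = "\<lambda>G::'k poly poly. poly (poly G 0) 0"
  interpret ev0: comm_ring_hom ?ev0
    by (rule comm_ring_hom_comp[OF comm_ring_hom_poly comm_ring_hom_poly])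
  have "eval_100 (Delta3 h)
      = ?ev0 (poly (map_poly (\<lambda>c. [:[:c:]:]) h) (poly ([:0, 1:] + [:[:0, 1:]:] + [:[:[:0, 1:]:]:]) 1))"
    by (simp add: eval_100_eq_poly Delta3_def poly_pcompose)
  also have "\<dots> = poly (map_poly ?ev0 (map_poly (\<lambda>c. [:[:c:]:]) h))
                     (?ev0 (poly ([:0, 1:] + [:[:0, 1:]:] + [:[:[:0, 1:]:]:]) 1))"
    by (rule ev0.hom_poly)
  also have "\<dots> = poly h 1"
    by (simp add: map_poly_map_poly o_def)
  finally show ?thesis .
qed

context nonassoc_alg
begin

(*
  F \<otimes> m \<mapsto> F(1,0,0) m(1).  It vanishes on the relations F \<Delta>(h) \<otimes> m - F \<otimes> h m of \<otimes>_H,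
  as both terms are mapped to F(1,0,0) h(1) m(1).
*)
definition collapse :: "'a poly poly poly poly poly \<Rightarrow> 'a poly" where
  "collapse X = eval_1 (eval_100 X)"

lemma additive_collapse: "additive collapse"
  unfolding collapse_def[abs_def] by (rule additive_comp[OF additive_eval_1 additive_eval_100])

lemma eval_1_scaleP: "eval_1 (scaleP sc c m) = scaleAt sc c (eval_1 m)"
  unfolding eval_1_def scaleP_def
  by (simp add: sum_coeffs_map_poly additive_sum_coeffs_comp[OF At.scale_right.additive_axioms])

lemma eval_1_actP: "eval_1 (actP sc h m) = scaleAt sc (poly h 1) (eval_1 m)"
  by (induct h rule: poly_induct_monom, induct m rule: poly_induct_monom)
    (simp_all add: actP_monom eval_1_monom poly_monom actP_left.add actP_right.add
      additive.add[OF additive_eval_1] At.scale_left_distrib At.scale_right_distrib)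

lemma eval_100_tensor3: "eval_100 (tensor3 (scaleP sc) F m) = scaleP sc (eval_100 F) m"
  unfolding eval_100_def tensor3_def
  by (subst sum_coeffs_map_poly)
    (simp_all add: coeff_map_poly additive_sum_coeffs_comp[OF P.scale_left.additive_axioms])

lemma eval_100_scale: "eval_100 (map_poly (map_poly (map_poly (scaleP sc c))) X) = scaleP sc c (eval_100 X)"
  unfolding eval_100_def
  by (subst sum_coeffs_map_poly)
    (simp_all add: coeff_map_poly additive_sum_coeffs_comp[OF P.scale_right.additive_axioms])

lemma collapse_tensor3: "collapse (tensor3 (scaleP sc) F m) = scaleAt sc (eval_100 F) (eval_1 m)"
  by (simp add: collapse_def eval_100_tensor3 eval_1_scaleP)

lemma collapse_kspan_rel3:
  assumes "X \<in> kspan (\<lambda>c. map_poly (map_poly (map_poly (scaleP sc c)))) (rel3 (scaleP sc) (actP sc))"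
  shows "collapse X = 0"
  using assms
proof (induct rule: kspan.induct)
  case kspan_zero
  show ?case by (rule additive.zero[OF additive_collapse])
next
  case (kspan_gen x)
  then obtain F h m where "x = tensor3 (scaleP sc) (F * Delta3 h) m - tensor3 (scaleP sc) F (actP sc h m)"
    by (auto simp: rel3_def)
  then show ?case
    by (simp add: additive.diff[OF additive_collapse] collapse_tensor3 eval_1_actP eval_100_mult
        eval_100_Delta3)
next
  case (kspan_add x y)
  then show ?case by (simp add: additive.add[OF additive_collapse])
next
  case (kspan_scale x c)
  then show ?case by (simp add: collapse_def eval_100_scale eval_1_scaleP)
qed

lemma not_eqH3_0_if_collapse_nonzero:
  assumes "collapse X \<noteq> 0"
  shows "\<not> eqH3 (scaleP sc) (actP sc) X 0"
  using assms collapse_kspan_rel3 by (auto simp: eqH3_def)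

end

context alt_nonassoc_alg
begin

lemma assocA_cyclic: "assocA mul b c a = assocA mul a b c"
  by (metis assocA_swap12 assocA_swap23 minus_minus)

lemma pseudo_associator_example:
  "pseudo_associator [:[:b, a:]:] [:[:c:]:] [:[:b, a:]:]
   = tensor3 (scaleP sc) [:0, 1:] [:[:assocA mul b c a:]:]
     + tensor3 (scaleP sc) [:[:[:0, 1:]:]:] [:[:assocA mul a c b:]:]"
proof -
  have x: "[:[:b, a:]:] = monom (monom b 0) 0 + monom (monom a 1) 0"
    by (simp add: monom_0 monom_Suc)
  have y: "[:[:c:]:] = monom (monom c 0) 0"
    by (simp add: monom_0)
  have assocA_xyx: "assocA mul u v u = 0" for u v
    using assocA_swap23[of u u v] alternative by (simp add: alternative_alg_def assocA_def)
  have acb: "assocA mul a c b = - assocA mul b c a"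
    by (simp add: assocA_swap23[of a c b] assocA_cyclic)
  have "pseudo_associator [:[:b, a:]:] [:[:c:]:] [:[:b, a:]:]
      = tensor5 sc (D1 + D2 + tvar) (assocA mul b c a) + tensor5 sc (D2 + D3 + tvar) (assocA mul a c b)"
    unfolding x y
    by (simp add: pseudo_associator_add pseudo_associator_monom triple_gen_def assocA_xyx tensor5_right.zero)
  also have "\<dots> = tensor5 sc D1 (assocA mul b c a) + tensor5 sc D3 (assocA mul a c b)"
    by (simp add: acb tensor5_right.minus tensor5_left.add)
  also have "\<dots> = tensor3 (scaleP sc) [:0, 1:] [:[:assocA mul b c a:]:]
                     + tensor3 (scaleP sc) [:[:[:0, 1:]:]:] [:[:assocA mul a c b:]:]"
    using tensor3_scaleP_eq_tensor5[of "[:0, 1:]" _ 0] tensor3_scaleP_eq_tensor5[of "[:[:[:0, 1:]:]:]" _ 0]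
    by (simp add: monom_0 embed3_D1_D3)
  finally show ?thesis .
qed

lemma example_not_eqH3_0:
  assumes "assocA mul a b c \<noteq> 0"
  shows "\<not> eqH3 (scaleP sc) (actP sc)
           (tensor3 (scaleP sc) [:0, 1:] [:[:assocA mul b c a:]:]
            + tensor3 (scaleP sc) [:[:[:0, 1:]:]:] [:[:assocA mul a c b:]:]) 0"
proof (rule not_eqH3_0_if_collapse_nonzero)
  have "eval_1 [:[:z:]:] = [:z:]" for z :: 'a
    using eval_1_monom[of "[:z:]" 0] by (simp add: monom_0)
  then have "collapse (tensor3 (scaleP sc) [:0, 1:] [:[:assocA mul b c a:]:]
      + tensor3 (scaleP sc) [:[:[:0, 1:]:]:] [:[:assocA mul a c b:]:]) = [:assocA mul b c a:]"
    by (simp add: additive.add[OF additive_collapse] collapse_tensor3 eval_100_eq_poly)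
  then show "collapse (tensor3 (scaleP sc) [:0, 1:] [:[:assocA mul b c a:]:]
      + tensor3 (scaleP sc) [:[:[:0, 1:]:]:] [:[:assocA mul a c b:]:]) \<noteq> 0"
    using assms by (simp add: assocA_cyclic)
qed

lemma not_pseudo_assoc_on_generated:
  assumes "assocA mul a b c \<noteq> 0"
  shows "\<not> pseudo_assoc_on (scaleP sc) (actP sc) (pprodP sc mul)
           (generated_subalgebra (scaleP sc) (actP sc) (pprodP sc mul) {[:[:b, a:]:], [:[:c:]:]})"
proof
  let ?S = "generated_subalgebra (scaleP sc) (actP sc) (pprodP sc mul) {[:[:b, a:]:], [:[:c:]:]}"
  assume "pseudo_assoc_on (scaleP sc) (actP sc) (pprodP sc mul) ?S"
  moreover have "[:[:b, a:]:] \<in> ?S" and "[:[:c:]:] \<in> ?S"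
    by (auto simp: generated_subalgebra_def)
  ultimately have "eqH3 (scaleP sc) (actP sc) (pseudo_associator [:[:b, a:]:] [:[:c:]:] [:[:b, a:]:]) 0"
    by (simp add: pseudo_assoc_on_def pseudo_associator_def eqH3_def)
  with example_not_eqH3_0[OF assms] show False
    by (simp add: pseudo_associator_example)
qed

end

theorem mainTheorem12:
  fixes scA :: "'k::field_char_0 \<Rightarrow> 'a::ab_group_add \<Rightarrow> 'a"
    and mulA :: "'a \<Rightarrow> 'a \<Rightarrow> 'a"
    and a b c :: 'a
  assumes "nonassoc_algebra scA mulA"
    and "alternative_alg mulA"
    and "\<not> associative_alg mulA"
    and "assocA mulA a b c \<noteq> 0"
  shows "H_comodule_algebra (scaleAt scA) (mulAt mulA) (coactAt scA)
    \<and> H_pseudoalgebra (scaleP scA) (actP scA) (pprodP scA mulA)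
    \<and> alternative_pseudo (scaleP scA) (actP scA) (pprodP scA mulA)
    \<and> eqH3 (scaleP scA) (actP scA)
         (lprod (scaleP scA) (pprodP scA mulA) (pprodP scA mulA [:[:b, a:]:] [:[:c:]:]) [:[:b, a:]:]
          - rprod (scaleP scA) (pprodP scA mulA) [:[:b, a:]:] (pprodP scA mulA [:[:c:]:] [:[:b, a:]:]))
         (tensor3 (scaleP scA) [:0, 1:] [:[:assocA mulA b c a:]:]
          + tensor3 (scaleP scA) [:[:[:0, 1:]:]:] [:[:assocA mulA a c b:]:])
    \<and> \<not> eqH3 (scaleP scA) (actP scA)
         (tensor3 (scaleP scA) [:0, 1:] [:[:assocA mulA b c a:]:]
          + tensor3 (scaleP scA) [:[:[:0, 1:]:]:] [:[:assocA mulA a c b:]:]) 0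
    \<and> \<not> pseudo_assoc_on (scaleP scA) (actP scA) (pprodP scA mulA)
         (generated_subalgebra (scaleP scA) (actP scA) (pprodP scA mulA) {[:[:b, a:]:], [:[:c:]:]})"
proof -
  interpret alt_nonassoc_alg scA mulA
    by unfold_locales (fact assms(1), fact assms(2))
  show ?thesis
    using H_comodule_algebra_At H_pseudoalgebra_P alternative_pseudo_P
      pseudo_associator_example[unfolded pseudo_associator_def] example_not_eqH3_0[OF assms(4)]
      not_pseudo_assoc_on_generated[OF assms(4)]
    by (simp add: eqH3_refl)
qed

end
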